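(* Let $p>1$, $a\in\mathbb{C}$ with $0<|a|<1$, $M\in\mathbb{N}$ (a positive integer), and $\varphi(z)=az^M$. Then the spectrum of $D_\varphi$ acting on $S^p$ is $$\sigma(D_\varphi)=\begin{cases}\{0,2a\} & \text{if } M=2,\\ \{0\} & \text{otherwise.}\end{cases}$$
   Context: $\mathbb{D}$ is the open unit disk. For $p>1$, $H^p$ is the Hardy space on $\mathbb{D}$ with norm $\|g\|_{H^p}^p=\sup_{0<r<1}\int_0^{2\pi}|g(re^{i\theta})|^p\frac{d\theta}{2\pi}$; $S^p$ is the space of analytic $f$ on $\mathbb{D}$ with $f'\in H^p$, normed by $\|f\|_{S^p}=|f(0)|+\|f'\|_{H^p}$. $D_\varphi f=f'\circ\varphi$. *)

theory Defs
  imports "HOL-Analysis.Analysis"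
begin

text \<open>Functions on the unit disk are represented as functions complex => complex
  normalised to be 0 outside the open unit disk, so that distinct elements of the
  spaces are distinct HOL functions.\<close>

definition disk_fun :: "(complex \<Rightarrow> complex) \<Rightarrow> bool" where
  "disk_fun f \<longleftrightarrow> f holomorphic_on ball 0 1 \<and> (\<forall>z. z \<notin> ball 0 1 \<longrightarrow> f z = 0)"

definition integral_mean :: "real \<Rightarrow> (complex \<Rightarrow> complex) \<Rightarrow> real \<Rightarrow> real" where
  "integral_mean p g r =
     integral {0..2*pi} (\<lambda>t. cmod (g (complex_of_real r * exp (\<i> * complex_of_real t))) powr p) / (2*pi)"

definition hardy :: "real \<Rightarrow> (complex \<Rightarrow> complex) set" where
  "hardy p = {g. g holomorphic_on ball 0 1 \<and> bdd_above (integral_mean p g ` {0<..<1})}"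

definition hardy_norm :: "real \<Rightarrow> (complex \<Rightarrow> complex) \<Rightarrow> real" where
  "hardy_norm p g = (SUP r\<in>{0<..<1}. integral_mean p g r) powr (1/p)"

definition Sp :: "real \<Rightarrow> (complex \<Rightarrow> complex) set" where
  "Sp p = {f. disk_fun f \<and> deriv f \<in> hardy p}"

definition Sp_norm :: "real \<Rightarrow> (complex \<Rightarrow> complex) \<Rightarrow> real" where
  "Sp_norm p f = cmod (f 0) + hardy_norm p (deriv f)"

definition Dphi :: "(complex \<Rightarrow> complex) \<Rightarrow> (complex \<Rightarrow> complex) \<Rightarrow> (complex \<Rightarrow> complex)" where
  "Dphi \<phi> f = (\<lambda>z. if z \<in> ball 0 1 then deriv f (\<phi> z) else 0)"

text \<open>Spectrum of D_phi on S^p: lambda such that D_phi - lambda I is not invertible in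
  the bounded operators on S^p, i.e. it is not a bijection of S^p with bounded inverse
  (bounded inverse = bounded below).\<close>
definition Dphi_spectrum :: "real \<Rightarrow> (complex \<Rightarrow> complex) \<Rightarrow> complex set" where
  "Dphi_spectrum p \<phi> = {c. \<not> (bij_betw (\<lambda>f z. Dphi \<phi> f z - c * f z) (Sp p) (Sp p) \<and>
       (\<exists>C. \<forall>f\<in>Sp p. Sp_norm p f \<le> C * Sp_norm p (\<lambda>z. Dphi \<phi> f z - c * f z)))}"

end

theory Submission
  imports Defs "HOL-Complex_Analysis.Complex_Analysis"
begin

text \<open>
  For \<open>c \<noteq> 0\<close> (and \<open>c \<noteq> 2a\<close> when \<open>M = 2\<close>) we invert \<open>D\<^sub>\<phi> - c\<close> on Taylor coefficients.
  If \<open>f = \<Sum> e\<^sub>k z\<^sup>k\<close> and \<open>g = D\<^sub>\<phi> f - c f = \<Sum> g\<^sub>k z\<^sup>k\<close>, then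
  \<open>c e\<^sub>k = [M dvd k] (k/M + 1) a\<^bsup>k/M\<^esup> e\<^bsub>k/M+1\<^esub> - g\<^sub>k\<close>.
  Cauchy's estimate bounds \<open>g\<^sub>k R\<^sup>k\<close> by \<open>\<parallel>g\<parallel>\<close> for a fixed \<open>|a| < R < 1\<close>, and this
  triangular system has a unique solution with \<open>e\<^sub>k R\<^sup>k\<close> bounded: for \<open>M = 1\<close> it is a
  Neumann series in the forward direction, for \<open>M \<ge> 2\<close> a recursion from \<open>k\<close> down to \<open>k/M + 1 < k\<close>,
  the single exception \<open>k = M = 2\<close> being the equation \<open>(c - 2a) e\<^sub>2 = -g\<^sub>2\<close>.  Since the
  coefficients of \<open>f\<close> decay like \<open>R\<^sup>-\<^sup>k\<close>, \<open>f'\<close> and \<open>f''\<close> are bounded on \<open>|w| \<le> |a|\<close>, so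
  \<open>f = (f' \<circ> \<phi> - g)/c\<close> has \<open>f' \<in> H\<^sup>p\<close> with norm controlled by \<open>\<parallel>g\<parallel>\<close>.  Conversely
  \<open>D\<^sub>\<phi> 1 = 0\<close>, and \<open>D\<^sub>\<phi> z\<^sup>2 = 2a z\<^sup>2\<close> when \<open>M = 2\<close>.
\<close>

section \<open>Taylor coefficients\<close>

definition taylor_coeff :: "(complex \<Rightarrow> complex) \<Rightarrow> nat \<Rightarrow> complex" where
  "taylor_coeff f n = (deriv ^^ n) f 0 / fact n"

lemma taylor_coeff_deriv: "taylor_coeff (deriv f) n = of_nat (Suc n) * taylor_coeff f (Suc n)"
proof -
  have "(deriv ^^ n) (deriv f) = (deriv ^^ Suc n) f"
    by (simp add: funpow_Suc_right del: funpow.simps)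
  then show ?thesis unfolding taylor_coeff_def
    by (simp del: funpow.simps of_nat_Suc add: fact_Suc field_simps)
qed

lemma taylor_coeff_sums:
  assumes "f holomorphic_on ball 0 1" "z \<in> ball 0 1"
  shows "(\<lambda>n. taylor_coeff f n * z ^ n) sums f z"
  using holomorphic_power_series[OF assms] unfolding taylor_coeff_def by simp

lemma taylor_coeff_unique:
  assumes r: "r > 0" and S: "\<And>z. z \<in> ball 0 r \<Longrightarrow> (\<lambda>n. u n * z ^ n) sums f z"
  shows "taylor_coeff f n = u n"
proof -
  define F where "F = Abs_fps u"
  have "fps_conv_radius F \<ge> ereal r"
    unfolding fps_conv_radius_def F_def fps_nth_Abs_fps
  proof (rule conv_radius_geI_ex')
    fix s :: real assume "0 < s" "ereal s < ereal r"
    then have "complex_of_real s \<in> ball 0 r" by auto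
    from S[OF this] show "summable (\<lambda>n. u n * complex_of_real s ^ n)"
      by (simp add: sums_iff)
  qed
  then have rad: "fps_conv_radius F > 0" using r
    by (meson ereal_less(2) less_le_trans)
  have ev: "eventually (\<lambda>z. eval_fps F z = f z) (nhds 0)"
  proof -
    have "eventually (\<lambda>z. z \<in> ball 0 r) (nhds (0::complex))"
      using r by (intro eventually_nhds_in_open) auto
    then show ?thesis
      by eventually_elim (use S in \<open>auto simp: eval_fps_def F_def sums_iff\<close>)
  qed
  have "f has_fps_expansion F" unfolding has_fps_expansion_def using rad ev by auto
  from fps_nth_fps_expansion[OF this, of n] show ?thesis
    unfolding taylor_coeff_def F_def by simp
qed

section \<open>Cauchy estimates and Hardy norms\<close>

definition circle_mean :: "(complex \<Rightarrow> complex) \<Rightarrow> real \<Rightarrow> real" where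
  "circle_mean h r =
     integral {0..2*pi} (\<lambda>t. cmod (h (complex_of_real r * exp (\<i> * complex_of_real t)))) / (2*pi)"

lemma continuous_on_circle_comp:
  assumes "h holomorphic_on ball 0 1" "0 \<le> r" "r < 1"
  shows "continuous_on S (\<lambda>t::real. h (complex_of_real r * exp (\<i> * complex_of_real t)))"
proof -
  have "continuous_on (ball 0 1) h" using assms(1) holomorphic_on_imp_continuous_on by blast
  moreover have "(\<lambda>t::real. complex_of_real r * exp (\<i> * complex_of_real t)) ` S \<subseteq> ball 0 1"
    using assms by (auto simp: norm_mult)
  moreover have "continuous_on S (\<lambda>t::real. complex_of_real r * exp (\<i> * complex_of_real t))"
    by (intro continuous_intros)
  ultimately show ?thesis
    using continuous_on_compose2[of "ball 0 1" h S "\<lambda>t::real. complex_of_real r * exp (\<i> * complex_of_real t)"]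
    by blast
qed

lemma continuous_on_circle_norm_powr:
  assumes "h holomorphic_on ball 0 1" "0 \<le> r" "r < 1" "p > 0"
  shows "continuous_on S (\<lambda>t::real. cmod (h (complex_of_real r * exp (\<i> * complex_of_real t))) powr p)"
  by (rule continuous_on_powr')
     (auto intro!: continuous_on_norm continuous_on_circle_comp[OF assms(1-3)] simp: assms(4))

lemma integral_rescale_two_pi:
  assumes "continuous_on {0..2*pi} F"
  shows "integral {0..1} (\<lambda>x. F (2*pi*x)) = integral {0..2*pi} F / (2*pi)"
proof -
  have "(F has_integral integral {0..2*pi} F) {0..2*pi}"
    using assms integrable_continuous_interval by blast
  from has_integral_stretch_real[OF this, of "2*pi"]
  have "((\<lambda>x. F (2*pi * x)) has_integral (1 / \<bar>2*pi\<bar>) *\<^sub>R integral {0..2*pi} F)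
          ((\<lambda>x. x / (2*pi)) ` {0..2*pi})"
    by simp
  moreover have "(\<lambda>x. x / (2*pi)) ` {0..2*pi} = {0..1}"
  proof
    show "(\<lambda>x. x / (2*pi)) ` {0..2*pi} \<subseteq> {0..1}" by (auto simp: field_simps)
    show "{0..1} \<subseteq> (\<lambda>x. x / (2*pi)) ` {0..2*pi}"
    proof
      fix y :: real assume "y \<in> {0..1}"
      then show "y \<in> (\<lambda>x. x / (2*pi)) ` {0..2*pi}"
        by (intro image_eqI[of _ _ "2*pi*y"]) (auto simp: field_simps)
    qed
  qed
  ultimately show ?thesis by (simp add: integral_unique divide_simps)
qed

lemma norm_cauchy_integrand_circlepath:
  assumes r: "0 < r" and x: "x \<in> {0..1}"
  shows "norm (h (circlepath 0 r x) / (circlepath 0 r x) ^ Suc m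
                * vector_derivative (circlepath 0 r) (at x within {0..1}))
         = 2 * pi / r ^ m * cmod (h (complex_of_real r * exp (\<i> * complex_of_real (2*pi*x))))"
proof -
  define e where "e = exp (\<i> * complex_of_real (2*pi*x))"
  have ee: "exp (2 * complex_of_real pi * \<i> * complex_of_real x) = e"
    unfolding e_def by (simp add: algebra_simps)
  have vd: "vector_derivative (circlepath 0 r) (at x within {0..1}) = 2 * pi * \<i> * r * e"
    using x ee by (simp add: vector_derivative_circlepath01)
  have cp: "circlepath 0 r x = complex_of_real r * e" unfolding circlepath ee by simp
  have n1: "cmod e = 1" unfolding e_def by simp
  have "norm (h (circlepath 0 r x) / (circlepath 0 r x) ^ Suc m
                * vector_derivative (circlepath 0 r) (at x within {0..1}))
        = cmod (h (complex_of_real r * e)) / r ^ Suc m * (2 * pi * r)"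
    unfolding vd cp using r
    by (simp only: norm_mult norm_divide norm_power n1 norm_of_real) (simp add: abs_of_pos)
  also have "\<dots> = 2 * pi / r ^ m * cmod (h (complex_of_real r * e))"
    using r by (simp add: field_simps)
  finally show ?thesis unfolding e_def .
qed

lemma norm_taylor_coeff_le_circle_mean:
  assumes hol: "h holomorphic_on ball 0 1" and r: "0 < r" "r < 1"
  shows "cmod (taylor_coeff h m) * r ^ m \<le> circle_mean h r"
proof -
  define I where "I x = h (circlepath 0 r x) / (circlepath 0 r x) ^ Suc m
                          * vector_derivative (circlepath 0 r) (at x within {0..1})" for x
  define H where "H t = cmod (h (complex_of_real r * exp (\<i> * complex_of_real t)))" for t :: real
  have contH: "continuous_on S H" for S
    unfolding H_def by (intro continuous_on_norm continuous_on_circle_comp[OF hol]) (use r in auto)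
  have normI: "norm (I x) = 2 * pi / r ^ m * H (2*pi*x)" if "x \<in> {0..1}" for x
    unfolding I_def H_def using norm_cauchy_integrand_circlepath[OF r(1) that] .
  have contf: "continuous_on (cball 0 r) h"
    by (rule continuous_on_subset[OF holomorphic_on_imp_continuous_on[OF hol]]) (use r in auto)
  have holr: "h holomorphic_on ball 0 r" by (rule holomorphic_on_subset[OF hol]) (use r in auto)
  have "((\<lambda>u. h u / (u - 0) ^ Suc m) has_contour_integral (2 * pi * \<i>) / fact m * (deriv ^^ m) h 0)
          (circlepath 0 r)"
    by (rule Cauchy_has_contour_integral_higher_derivative_circlepath[OF contf holr]) (use r in auto)
  then have HI: "(I has_integral (2 * pi * \<i>) / fact m * (deriv ^^ m) h 0) {0..1}"
    unfolding has_contour_integral_def I_def by simp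
  have c1: "continuous_on {0..1} (\<lambda>x. H (2*pi*x))"
    by (rule continuous_on_compose2[OF contH[of UNIV]]) (auto intro: continuous_intros)
  have intg: "(\<lambda>x. norm (I x)) integrable_on {0..1}"
    using integrable_continuous_interval[OF continuous_on_mult_left[OF c1, of "2 * pi / r ^ m"]]
    by (rule integrable_eq) (use normI in simp)
  have "2 * pi * (cmod ((deriv ^^ m) h 0) / fact m) = norm ((2 * pi * \<i>) / fact m * (deriv ^^ m) h 0)"
    by (simp add: norm_mult norm_divide)
  also have "\<dots> \<le> integral {0..1} (\<lambda>x. norm (I x))"
    using integral_norm_bound_integral[OF has_integral_integrable[OF HI] intg] integral_unique[OF HI]
    by auto
  also have "\<dots> = integral {0..1} (\<lambda>x. 2 * pi / r ^ m * H (2*pi*x))"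
    by (rule integral_cong) (use normI in auto)
  also have "\<dots> = 2 * pi * (circle_mean h r / r ^ m)"
    unfolding circle_mean_def H_def[symmetric] integral_mult_right integral_rescale_two_pi[OF contH]
    by simp
  finally have "cmod ((deriv ^^ m) h 0) / fact m \<le> circle_mean h r / r ^ m"
    by (rule mult_left_le_imp_le) simp
  then show ?thesis
    using r unfolding taylor_coeff_def by (simp add: norm_divide pos_le_divide_eq)
qed

lemma integral_mean_nonneg:
  assumes "h holomorphic_on ball 0 1" "0 \<le> r" "r < 1" "p > 0"
  shows "integral_mean p h r \<ge> 0"
  unfolding integral_mean_def
  by (intro divide_nonneg_pos integral_nonneg integrable_continuous_interval
        continuous_on_circle_norm_powr[OF assms]) auto

lemma hardy_norm_nonneg: "hardy_norm p h \<ge> 0"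
  unfolding hardy_norm_def by simp

lemma integral_mean_le_hardy_norm:
  assumes h: "h \<in> hardy p" and p: "p > 0" and r: "0 < r" "r < 1"
  shows "integral_mean p h r \<le> hardy_norm p h powr p"
proof -
  have hol: "h holomorphic_on ball 0 1" and bdd: "bdd_above (integral_mean p h ` {0<..<1})"
    using h unfolding hardy_def by auto
  have le: "integral_mean p h r \<le> (SUP r\<in>{0<..<1}. integral_mean p h r)"
    by (rule cSUP_upper[OF _ bdd]) (use r in auto)
  have "0 \<le> (SUP r\<in>{0<..<1}. integral_mean p h r)"
    using le integral_mean_nonneg[OF hol _ r(2) p] r by linarith
  then have "hardy_norm p h powr p = (SUP r\<in>{0<..<1}. integral_mean p h r)"
    unfolding hardy_norm_def using p by (simp add: powr_powr)
  then show ?thesis using le by simp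
qed

lemma le_add_powr_young:
  fixes x t p :: real
  assumes "x \<ge> 0" "t > 0" "p \<ge> 1"
  shows "x \<le> t + t powr (1 - p) * x powr p"
proof (cases "x \<le> t")
  case True then show ?thesis using assms by (simp add: add_increasing2)
next
  case False
  then have xt: "x / t \<ge> 1" using assms by simp
  have "x / t = (x / t) powr 1" using xt by (intro powr_one[symmetric]) simp
  also have "\<dots> \<le> (x / t) powr p" using xt assms by (intro powr_mono) auto
  also have "\<dots> = x powr p / t powr p" using assms by (simp add: powr_divide)
  finally have "x \<le> t * (x powr p / t powr p)" using assms by (simp add: field_simps)
  also have "\<dots> = t powr (1 - p) * x powr p"
    using assms by (simp add: powr_diff field_simps)
  finally show ?thesis using assms by simp
qed

lemma circle_mean_le_integral_mean:
  assumes hol: "h holomorphic_on ball 0 1" and p: "p \<ge> 1" and r: "0 < r" "r < 1" and t: "t > 0"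
  shows "circle_mean h r \<le> t + t powr (1 - p) * integral_mean p h r"
proof -
  define F where "F t = cmod (h (complex_of_real r * exp (\<i> * complex_of_real t)))" for t :: real
  have cF: "continuous_on {0..2*pi} F" unfolding F_def
    by (intro continuous_on_norm continuous_on_circle_comp[OF hol]) (use r in auto)
  have cFp: "continuous_on {0..2*pi} (\<lambda>x. F x powr p)" unfolding F_def
    by (rule continuous_on_circle_norm_powr[OF hol]) (use r p in auto)
  have "integral {0..2*pi} F \<le> integral {0..2*pi} (\<lambda>x. t + t powr (1 - p) * F x powr p)"
    by (intro integral_le integrable_continuous_interval cF continuous_intros cFp)
       (auto intro!: le_add_powr_young simp: F_def t p)
  also have "\<dots> = 2 * pi * t + t powr (1 - p) * integral {0..2*pi} (\<lambda>x. F x powr p)"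
    using integrable_continuous_interval[OF continuous_on_mult_left[OF cFp, of "t powr (1 - p)"]]
    by (subst integral_add) auto
  finally show ?thesis
    unfolding circle_mean_def integral_mean_def F_def[symmetric] by (simp add: field_simps)
qed

lemma circle_mean_le_hardy_norm:
  assumes h: "h \<in> hardy p" and p: "p > 1" and r: "0 < r" "r < 1"
  shows "circle_mean h r \<le> 2 * hardy_norm p h"
proof -
  have hol: "h holomorphic_on ball 0 1" using h unfolding hardy_def by auto
  define N where "N = hardy_norm p h"
  have key: "circle_mean h r \<le> t + t powr (1 - p) * N powr p" if t: "t > 0" for t
  proof -
    have "circle_mean h r \<le> t + t powr (1 - p) * integral_mean p h r"
      using circle_mean_le_integral_mean[OF hol _ r t] p by simp
    also have "\<dots> \<le> t + t powr (1 - p) * N powr p"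
      using integral_mean_le_hardy_norm[OF h _ r] p unfolding N_def
      by (intro add_left_mono mult_left_mono) auto
    finally show ?thesis .
  qed
  show ?thesis
  proof (cases "N > 0")
    case True
    have "N powr (1 - p) * N powr p = N" using True by (simp add: powr_add[symmetric])
    then show ?thesis using key[OF True] N_def by simp
  next
    case False
    then have N: "N = 0" using hardy_norm_nonneg[of p h] N_def by simp
    have "circle_mean h r \<le> 0"
    proof (rule field_le_epsilon)
      fix e :: real assume "e > 0"
      then show "circle_mean h r \<le> 0 + e" using key[of e] N p by simp
    qed
    then show ?thesis using N N_def by simp
  qed
qed

lemma norm_taylor_coeff_le_hardy_norm:
  assumes h: "h \<in> hardy p" and p: "p > 1" and r: "0 < r" "r < 1"
  shows "cmod (taylor_coeff h m) * r ^ m \<le> 2 * hardy_norm p h"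
  using norm_taylor_coeff_le_circle_mean[of h r m] circle_mean_le_hardy_norm[OF assms] h r
  unfolding hardy_def by auto

lemma powr_le_of_le_add:
  fixes x y S k p :: real
  assumes "x \<ge> 0" "y \<ge> 0" "S \<ge> 0" "k \<ge> 0" "p > 0" "x \<le> S + k * y"
  shows "x powr p \<le> 2 powr p * (S powr p + (k * y) powr p)"
proof -
  define m where "m = max S (k * y)"
  have "x \<le> 2 * m" using assms unfolding m_def by linarith
  then have "x powr p \<le> (2 * m) powr p" using assms by (intro powr_mono2) auto
  also have "\<dots> = 2 powr p * m powr p" using assms by (simp add: powr_mult m_def)
  also have "m powr p \<le> S powr p + (k * y) powr p"
    unfolding m_def by (cases "S \<le> k * y") (auto simp: max_def)
  then have "2 powr p * m powr p \<le> 2 powr p * (S powr p + (k * y) powr p)"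
    by (intro mult_left_mono) auto
  finally show ?thesis .
qed

lemma integral_mean_dominated:
  assumes p: "p > 0" and u: "u holomorphic_on ball 0 1" and v: "v holomorphic_on ball 0 1"
    and S: "S \<ge> 0" and k: "k \<ge> 0" and r: "0 < r" "r < 1"
    and le: "\<And>z. z \<in> ball 0 1 \<Longrightarrow> cmod (u z) \<le> S + k * cmod (v z)"
  shows "integral_mean p u r \<le> 2 powr p * (S powr p + k powr p * integral_mean p v r)"
proof -
  define F where "F t = cmod (u (complex_of_real r * exp (\<i> * complex_of_real t)))" for t :: real
  define G where "G t = cmod (v (complex_of_real r * exp (\<i> * complex_of_real t)))" for t :: real
  have cF: "continuous_on {0..2*pi} (\<lambda>x. F x powr p)" unfolding F_def
    by (rule continuous_on_circle_norm_powr[OF u]) (use r p in auto)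
  have cG: "continuous_on {0..2*pi} (\<lambda>x. G x powr p)" unfolding G_def
    by (rule continuous_on_circle_norm_powr[OF v]) (use r p in auto)
  have pt: "F x powr p \<le> 2 powr p * (S powr p + k powr p * G x powr p)" for x
  proof -
    have "complex_of_real r * exp (\<i> * complex_of_real x) \<in> ball 0 1"
      using r by (simp add: norm_mult)
    from le[OF this] have "F x \<le> S + k * G x" unfolding F_def G_def .
    from powr_le_of_le_add[OF _ _ S k _ this] p show ?thesis
      by (simp add: F_def G_def powr_mult k)
  qed
  have "integral {0..2*pi} (\<lambda>x. F x powr p)
        \<le> integral {0..2*pi} (\<lambda>x. 2 powr p * (S powr p + k powr p * G x powr p))"
    by (intro integral_le integrable_continuous_interval cF continuous_intros cG pt) auto
  also have "\<dots> = 2 powr p * integral {0..2*pi} (\<lambda>x. S powr p + k powr p * G x powr p)"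
    by simp
  also have "integral {0..2*pi} (\<lambda>x. S powr p + k powr p * G x powr p)
             = 2 * pi * S powr p + k powr p * integral {0..2*pi} (\<lambda>x. G x powr p)"
    using integrable_continuous_interval[OF continuous_on_mult_left[OF cG, of "k powr p"]]
    by (subst integral_add) auto
  finally show ?thesis
    unfolding integral_mean_def F_def[symmetric] G_def[symmetric] by (simp add: field_simps)
qed

lemma hardy_dominated:
  assumes p: "p > 1" and u: "u holomorphic_on ball 0 1" and v: "v \<in> hardy p"
    and S: "S \<ge> 0" and k: "k \<ge> 0"
    and le: "\<And>z. z \<in> ball 0 1 \<Longrightarrow> cmod (u z) \<le> S + k * cmod (v z)"
  shows "u \<in> hardy p" "hardy_norm p u \<le> 4 * (S + k * hardy_norm p v)"
proof -
  have hv: "v holomorphic_on ball 0 1" using v unfolding hardy_def by auto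
  define N where "N = hardy_norm p v"
  have N0: "N \<ge> 0" unfolding N_def by (rule hardy_norm_nonneg)
  define Q where "Q = 2 powr p * (S powr p + (k * N) powr p)"
  have IM: "integral_mean p u r \<le> Q" if r: "0 < r" "r < 1" for r
  proof -
    have "integral_mean p u r \<le> 2 powr p * (S powr p + k powr p * integral_mean p v r)"
      using integral_mean_dominated[OF _ u hv S k r le] p by simp
    also have "\<dots> \<le> 2 powr p * (S powr p + k powr p * N powr p)"
      using integral_mean_le_hardy_norm[OF v _ r] p unfolding N_def
      by (intro mult_left_mono add_left_mono) auto
    finally show ?thesis unfolding Q_def using k N0 by (simp add: powr_mult)
  qed
  have bdd: "bdd_above (integral_mean p u ` {0<..<1})"
    by (rule bdd_aboveI[of _ Q]) (use IM in auto)
  then show "u \<in> hardy p" unfolding hardy_def using u by auto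
  have "(SUP r\<in>{0<..<1}. integral_mean p u r) \<le> Q"
    by (rule cSUP_least) (use IM in auto)
  then have "hardy_norm p u \<le> Q powr (1/p)" unfolding hardy_norm_def
    using p by (intro powr_mono2) (auto intro!: cSUP_upper2[OF bdd, of "1/2"] integral_mean_nonneg[OF u])
  also have "Q \<le> 2 powr p * (2 * (S + k * N) powr p)"
  proof -
    have "S powr p \<le> (S + k * N) powr p" using S k N0 p by (intro powr_mono2) auto
    moreover have "(k * N) powr p \<le> (S + k * N) powr p" using S k N0 p by (intro powr_mono2) auto
    ultimately show ?thesis unfolding Q_def by (intro mult_left_mono) auto
  qed
  then have "Q powr (1/p) \<le> (2 powr p * (2 * (S + k * N) powr p)) powr (1/p)"
    using p by (intro powr_mono2) (auto simp: Q_def)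
  also have "\<dots> = 2 * 2 powr (1/p) * (S + k * N)"
    using p S k N0 by (simp add: powr_mult powr_powr)
  also have "\<dots> \<le> 2 * 2 * (S + k * N)"
  proof -
    have "2 powr (1/p) \<le> 2 powr 1" using p by (intro powr_mono) auto
    then show ?thesis using S k N0 by (intro mult_right_mono mult_left_mono) auto
  qed
  finally show "hardy_norm p u \<le> 4 * (S + k * hardy_norm p v)" using N_def by simp
qed

lemma SpD:
  assumes "f \<in> Sp p"
  shows "f holomorphic_on ball 0 1" "deriv f \<in> hardy p" "\<And>z. z \<notin> ball 0 1 \<Longrightarrow> f z = 0"
  using assms unfolding Sp_def disk_fun_def by auto

lemma Sp_norm_ge:
  shows "cmod (g 0) \<le> Sp_norm p g" "hardy_norm p (deriv g) \<le> Sp_norm p g"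
  using hardy_norm_nonneg[of p "deriv g"] unfolding Sp_norm_def by auto

lemma norm_taylor_coeff_le_Sp_norm:
  assumes g: "g \<in> Sp p" and p: "p > 1" and r: "0 < r" "r < 1"
  shows "cmod (taylor_coeff g n) * r ^ n \<le> 2 * Sp_norm p g"
proof (cases n)
  case 0
  then show ?thesis using Sp_norm_ge hardy_norm_nonneg[of p "deriv g"]
    unfolding taylor_coeff_def Sp_norm_def by auto
next
  case (Suc m)
  have "cmod (taylor_coeff g (Suc m)) * r ^ Suc m \<le> real (Suc m) * cmod (taylor_coeff g (Suc m)) * r ^ m"
  proof -
    have "r ^ Suc m \<le> real (Suc m) * r ^ m"
      using r mult_right_mono[of r "real (Suc m)" "r ^ m"] by simp
    then show ?thesis by (metis mult.assoc mult.commute mult_left_mono norm_ge_zero)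
  qed
  also have "\<dots> = cmod (taylor_coeff (deriv g) m) * r ^ m"
    unfolding taylor_coeff_deriv by (simp only: norm_mult norm_of_nat)
  also have "\<dots> \<le> 2 * hardy_norm p (deriv g)"
    by (rule norm_taylor_coeff_le_hardy_norm[OF SpD(2)[OF g] p r])
  also have "\<dots> \<le> 2 * Sp_norm p g" using Sp_norm_ge(2) by simp
  finally show ?thesis using Suc by simp
qed

lemma Sp_eqI_taylor_coeff:
  assumes f1: "f1 \<in> Sp p" and f2: "f2 \<in> Sp p" and e: "taylor_coeff f1 = taylor_coeff f2"
  shows "f1 = f2"
proof
  fix z
  show "f1 z = f2 z"
  proof (cases "z \<in> ball 0 1")
    case True
    have "(\<lambda>n. taylor_coeff f1 n * z ^ n) sums f1 z" by (rule taylor_coeff_sums[OF SpD(1)[OF f1] True])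
    moreover have "(\<lambda>n. taylor_coeff f1 n * z ^ n) sums f2 z"
      using taylor_coeff_sums[OF SpD(1)[OF f2] True] e by simp
    ultimately show ?thesis using sums_unique2 by blast
  next
    case False
    then show ?thesis using SpD(3)[OF f1] SpD(3)[OF f2] by simp
  qed
qed

section \<open>Composition with \<open>a z\<^sup>M\<close>\<close>

lemma norm_mult_power_le: "z \<in> ball 0 1 \<Longrightarrow> cmod (a * z ^ M) \<le> cmod a"
proof -
  assume "z \<in> ball 0 1"
  then have "cmod z ^ M \<le> 1" by (intro power_le_one) auto
  then show "cmod (a * z ^ M) \<le> cmod a" by (simp add: norm_mult norm_power mult_left_le)
qed

lemma mult_power_in_ball: "cmod a < 1 \<Longrightarrow> z \<in> ball 0 1 \<Longrightarrow> a * z ^ M \<in> ball 0 1"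
  using norm_mult_power_le[of z a M] by simp

lemma has_field_derivative_deriv_comp_pow:
  assumes f: "f holomorphic_on ball 0 1" and a: "cmod a < 1" and z: "z \<in> ball 0 1"
  shows "((\<lambda>z. deriv f (a * z ^ M)) has_field_derivative
           (of_nat M * a * z ^ (M - 1) * deriv (deriv f) (a * z ^ M))) (at z)"
proof -
  have d1: "(deriv f has_field_derivative deriv (deriv f) (a * z ^ M)) (at (a * z ^ M))"
    by (rule holomorphic_derivI[OF holomorphic_deriv[OF f] _ mult_power_in_ball[OF a z]]) auto
  have "((\<lambda>x. x ^ M) has_field_derivative of_nat M * z ^ (M - 1)) (at z)"
    using DERIV_power[OF DERIV_ident[of "at z"], of M] by simp
  then have d2: "((\<lambda>z. a * z ^ M) has_field_derivative (a * (of_nat M * z ^ (M - 1)))) (at z)"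
    by (rule DERIV_cmult)
  from DERIV_chain2[OF d1 d2] show ?thesis by (simp add: algebra_simps)
qed

lemma hardy_deriv_lincomb_comp_pow:
  assumes p: "p > 1" and f: "f holomorphic_on ball 0 1" and a: "cmod a < 1"
    and K: "K holomorphic_on ball 0 1" "deriv K \<in> hardy p"
    and H: "\<And>z. z \<in> ball 0 1 \<Longrightarrow> H z = \<alpha> * deriv f (a * z ^ M) + \<beta> * K z"
    and S: "S \<ge> 0" "\<And>w. cmod w \<le> cmod a \<Longrightarrow> cmod (deriv (deriv f) w) \<le> S"
  shows "H holomorphic_on ball 0 1" "deriv H \<in> hardy p"
    "hardy_norm p (deriv H) \<le> 4 * (cmod \<alpha> * M * cmod a * S + cmod \<beta> * hardy_norm p (deriv K))"
proof -
  define D where "D z = \<alpha> * (of_nat M * a * z ^ (M - 1) * deriv (deriv f) (a * z ^ M)) + \<beta> * deriv K z"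
    for z
  have dH: "(H has_field_derivative D z) (at z)" if z: "z \<in> ball 0 1" for z
  proof (rule has_field_derivative_transform_within_open[OF _ open_ball z])
    show "((\<lambda>z. \<alpha> * deriv f (a * z ^ M) + \<beta> * K z) has_field_derivative D z) (at z)"
      unfolding D_def
      by (intro DERIV_add DERIV_cmult has_field_derivative_deriv_comp_pow[OF f a z]
            holomorphic_derivI[OF K(1) _ z]) auto
  qed (use H in simp)
  show hH: "H holomorphic_on ball 0 1"
    unfolding holomorphic_on_def using dH field_differentiable_def field_differentiable_at_within by blast
  have hdH: "deriv H holomorphic_on ball 0 1" by (rule holomorphic_deriv[OF hH]) auto
  have eq: "deriv H z = D z" if "z \<in> ball 0 1" for z using DERIV_imp_deriv[OF dH[OF that]] .
  have le: "cmod (deriv H z) \<le> cmod \<alpha> * M * cmod a * S + cmod \<beta> * cmod (deriv K z)"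
    if z: "z \<in> ball 0 1" for z
  proof -
    have z1: "cmod z ^ (M - 1) \<le> 1" using z by (intro power_le_one) auto
    have s: "cmod (deriv (deriv f) (a * z ^ M)) \<le> S" by (rule S(2)[OF norm_mult_power_le[OF z]])
    have "cmod (\<alpha> * (of_nat M * a * z ^ (M - 1) * deriv (deriv f) (a * z ^ M)))
        = cmod \<alpha> * M * cmod a * cmod z ^ (M - 1) * cmod (deriv (deriv f) (a * z ^ M))"
      by (simp add: norm_mult norm_power)
    also have "\<dots> \<le> cmod \<alpha> * M * cmod a * 1 * S"
      by (intro mult_mono z1 s mult_nonneg_nonneg) auto
    finally show ?thesis unfolding eq[OF z] D_def
      by (intro order_trans[OF norm_triangle_ineq]) (simp add: norm_mult)
  qed
  show "deriv H \<in> hardy p"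
    by (rule hardy_dominated(1)[OF p hdH K(2) _ _ le]) (use S in auto)
  show "hardy_norm p (deriv H) \<le> 4 * (cmod \<alpha> * M * cmod a * S + cmod \<beta> * hardy_norm p (deriv K))"
    by (rule hardy_dominated(2)[OF p hdH K(2) _ _ le]) (use S in auto)
qed


definition Dphi_coeff :: "nat \<Rightarrow> complex \<Rightarrow> (nat \<Rightarrow> complex) \<Rightarrow> nat \<Rightarrow> complex" where
  "Dphi_coeff M a e k =
     (if M dvd k then of_nat (k div M + 1) * a ^ (k div M) * e (k div M + 1) else 0)"

lemma Dphi_coeff_1: "Dphi_coeff 1 a e k = of_nat (Suc k) * a ^ k * e (Suc k)"
  unfolding Dphi_coeff_def by simp

lemma Dphi_coeff_diff: "Dphi_coeff M a (\<lambda>k. e k - e' k) k = Dphi_coeff M a e k - Dphi_coeff M a e' k"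
  unfolding Dphi_coeff_def by (simp add: algebra_simps)

lemma sums_Dphi_coeff_reindex:
  assumes M: "M \<ge> 1" and S: "(\<lambda>n. of_nat (Suc n) * e (Suc n) * (a * z ^ M) ^ n) sums s"
  shows "(\<lambda>k. Dphi_coeff M a e k * z ^ k) sums s"
proof -
  have "of_nat (Suc n) * e (Suc n) * (a * z ^ M) ^ n = Dphi_coeff M a e (M * n) * z ^ (M * n)" for n
    using M unfolding Dphi_coeff_def by (simp add: power_mult_distrib power_mult algebra_simps)
  then have "(\<lambda>n. Dphi_coeff M a e (M * n) * z ^ (M * n)) sums s" using S by simp
  moreover have "strict_mono (\<lambda>n::nat. M * n)" using M by (intro strict_monoI) auto
  ultimately show ?thesis
    by (subst (asm) sums_mono_reindex[where f = "\<lambda>k. Dphi_coeff M a e k * z ^ k"]) (auto simp: Dphi_coeff_def)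
qed

lemma Dphi_coeff_sums:
  assumes f: "f holomorphic_on ball 0 1" and a: "cmod a < 1" and M: "M \<ge> 1" and z: "z \<in> ball 0 1"
  shows "(\<lambda>k. Dphi_coeff M a (taylor_coeff f) k * z ^ k) sums deriv f (a * z ^ M)"
proof (rule sums_Dphi_coeff_reindex[OF M])
  have "(\<lambda>n. taylor_coeff (deriv f) n * (a * z ^ M) ^ n) sums deriv f (a * z ^ M)"
    by (rule taylor_coeff_sums[OF holomorphic_deriv[OF f] mult_power_in_ball[OF a z]]) auto
  then show "(\<lambda>n. of_nat (Suc n) * taylor_coeff f (Suc n) * (a * z ^ M) ^ n) sums deriv f (a * z ^ M)"
    unfolding taylor_coeff_deriv .
qed

lemma taylor_coeff_Dphi_diff:
  assumes f: "f holomorphic_on ball 0 1" and a: "cmod a < 1" and M: "M \<ge> 1"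
    and g: "\<And>z. z \<in> ball 0 1 \<Longrightarrow> g z = deriv f (a * z ^ M) - c * f z"
  shows "taylor_coeff g k = Dphi_coeff M a (taylor_coeff f) k - c * taylor_coeff f k"
proof (rule taylor_coeff_unique[of 1])
  fix z :: complex assume z: "z \<in> ball 0 1"
  have "(\<lambda>k. Dphi_coeff M a (taylor_coeff f) k * z ^ k - c * (taylor_coeff f k * z ^ k))
          sums (deriv f (a * z ^ M) - c * f z)"
    by (intro sums_diff sums_mult Dphi_coeff_sums[OF f a M z] taylor_coeff_sums[OF f z])
  then show "(\<lambda>k. (Dphi_coeff M a (taylor_coeff f) k - c * taylor_coeff f k) * z ^ k) sums g z"
    by (simp add: g[OF z] algebra_simps)
qed simp

section \<open>Solving the coefficient equation\<close>

lemma prod_max_one_ge_1: "1 \<le> (\<Prod>i<n. max 1 ((t :: nat \<Rightarrow> real) i))"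
  by (rule prod_ge_1) auto

lemma prod_max_one_mono: "m \<le> n \<Longrightarrow> (\<Prod>i<m. max 1 ((t :: nat \<Rightarrow> real) i)) \<le> (\<Prod>i<n. max 1 (t i))"
proof (induction n)
  case 0 then show ?case by simp
next
  case (Suc n)
  show ?case
  proof (cases "m = Suc n")
    case False
    then have "(\<Prod>i<m. max 1 (t i)) \<le> (\<Prod>i<n. max 1 (t i))" using Suc by simp
    also have "\<dots> \<le> (\<Prod>i<n. max 1 (t i)) * max 1 (t n)"
      using prod_max_one_ge_1[where t=t and n=n] by (intro mult_le_cancel_left1[THEN iffD2]) auto
    finally show ?thesis by simp
  qed simp
qed

lemma prod_max_one_bounded:
  fixes t :: "nat \<Rightarrow> real"
  assumes "eventually (\<lambda>i. t i \<le> 1) sequentially"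
  shows "\<exists>U. \<forall>n. (\<Prod>i<n. max 1 (t i)) \<le> U"
proof -
  obtain N where N: "\<And>i. i \<ge> N \<Longrightarrow> t i \<le> 1" using assms unfolding eventually_sequentially by blast
  have eq: "(\<Prod>i<n. max 1 (t i)) = (\<Prod>i<N. max 1 (t i))" if "n \<ge> N" for n
    using that
  proof (induction n)
    case 0 then show ?case by simp
  next
    case (Suc n)
    show ?case
    proof (cases "Suc n = N")
      case False
      then have "n \<ge> N" using Suc by simp
      then show ?thesis using Suc N[of n] by (simp add: max_def)
    qed simp
  qed
  have "(\<Prod>i<n. max 1 (t i)) \<le> (\<Prod>i<N. max 1 (t i))" for n
    using prod_max_one_mono[where t=t and m=n and n="max n N"] eq[of "max n N"] by simp
  then show ?thesis by blast
qed

text \<open>For \<open>M = 1\<close> the equation \<open>c e\<^sub>k = (k+1) a\<^sup>k e\<^sub>k\<^sub>+\<^sub>1 - G\<^sub>k\<close> is solved by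
  \<open>e\<^sub>k = -(1/c) \<Sum>\<^sub>j forward_term a c G k j\<close>, a Neumann series whose convergence is
  controlled by weights \<open>w\<close> with \<open>(k+1)|a|\<^sup>k w\<^sub>k \<le> q |c| w\<^sub>k\<^sub>+\<^sub>1\<close>, \<open>q < 1\<close>.\<close>

definition forward_term :: "complex \<Rightarrow> complex \<Rightarrow> (nat \<Rightarrow> complex) \<Rightarrow> nat \<Rightarrow> nat \<Rightarrow> complex" where
  "forward_term a c G k j = G (k + j) * (\<Prod>i<j. of_nat (k + i + 1) * a ^ (k + i) / c)"

lemma forward_term_Suc: "forward_term a c G k (Suc j) = (of_nat (Suc k) * a ^ k / c) * forward_term a c G (Suc k) j"
  unfolding forward_term_def prod.lessThan_Suc_shift by (simp add: algebra_simps)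

lemma norm_forward_prod_le:
  assumes w: "\<And>k. w k > 0" and ratio: "\<And>k. of_nat (Suc k) * cmod a ^ k * w k \<le> q * cmod c * w (Suc k)"
    and c: "c \<noteq> 0" and q: "q \<ge> 0"
  shows "cmod (\<Prod>i<j. of_nat (k + i + 1) * a ^ (k + i) / c) * w k \<le> q ^ j * w (k + j)"
proof (induction j)
  case 0 then show ?case by simp
next
  case (Suc j)
  have "cmod (\<Prod>i<Suc j. of_nat (k + i + 1) * a ^ (k + i) / c) * w k
     = (cmod (\<Prod>i<j. of_nat (k + i + 1) * a ^ (k + i) / c) * w k) * (of_nat (Suc (k + j)) * cmod a ^ (k + j) / cmod c)"
  proof -
    have n: "cmod (of_nat (k + j + 1) * a ^ (k + j) / c) = of_nat (Suc (k + j)) * cmod a ^ (k + j) / cmod c"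
      by (simp only: norm_mult norm_divide norm_power norm_of_nat) simp
    show ?thesis unfolding prod.lessThan_Suc norm_mult n by (simp only: mult_ac)
  qed
  also have "\<dots> \<le> (q ^ j * w (k + j)) * (of_nat (Suc (k + j)) * cmod a ^ (k + j) / cmod c)"
    by (intro mult_right_mono Suc) auto
  also have "\<dots> = q ^ j * (of_nat (Suc (k + j)) * cmod a ^ (k + j) * w (k + j)) / cmod c"
    by (simp add: algebra_simps)
  also have "\<dots> \<le> q ^ j * (q * cmod c * w (Suc (k + j))) / cmod c"
    using q c by (intro divide_right_mono mult_left_mono ratio) auto
  also have "\<dots> = q ^ Suc j * w (k + Suc j)" using c by (simp add: field_simps)
  finally show ?case .
qed

lemma norm_forward_term_le:
  assumes w: "\<And>k. w k > 0" and ratio: "\<And>k. of_nat (Suc k) * cmod a ^ k * w k \<le> q * cmod c * w (Suc k)"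
    and c: "c \<noteq> 0" and q: "q \<ge> 0" and G: "\<And>n. cmod (G n) * w n \<le> B"
  shows "cmod (forward_term a c G k j) \<le> B / w k * q ^ j"
proof -
  have "cmod (forward_term a c G k j) * w k
        = cmod (G (k + j)) * (cmod (\<Prod>i<j. of_nat (k + i + 1) * a ^ (k + i) / c) * w k)"
    unfolding forward_term_def by (simp add: norm_mult)
  also have "\<dots> \<le> cmod (G (k + j)) * (q ^ j * w (k + j))"
    by (intro mult_left_mono norm_forward_prod_le[OF w ratio c q]) auto
  also have "\<dots> = (cmod (G (k + j)) * w (k + j)) * q ^ j" by simp
  also have "\<dots> \<le> B * q ^ j" using G q by (intro mult_right_mono) auto
  finally show ?thesis using w[of k] by (simp add: field_simps)
qed

lemma forward_eqn_solvable:
  assumes c: "c \<noteq> 0" and q: "0 \<le> q" "q < 1" and w: "\<And>k. w k > 0"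
    and ratio: "\<And>k. of_nat (Suc k) * cmod a ^ k * w k \<le> q * cmod c * w (Suc k)"
    and G: "\<And>n. cmod (G n) * w n \<le> B"
  shows "\<exists>e. (\<forall>k. c * e k = of_nat (Suc k) * a ^ k * e (Suc k) - G k) \<and>
             (\<forall>k. cmod (e k) * w k \<le> B / (cmod c * (1 - q)))"
proof -
  note Xb = norm_forward_term_le[OF w ratio c q(1) G]
  have gs: "summable (\<lambda>j. B / w k * q ^ j)" for k
    using q by (intro summable_mult summable_geometric) auto
  have sX: "summable (forward_term a c G k)" for k
    by (rule summable_comparison_test'[OF gs, of 0]) (use Xb in auto)
  define e where "e k = - (suminf (forward_term a c G k)) / c" for k
  have "c * e k = of_nat (Suc k) * a ^ k * e (Suc k) - G k" for k
  proof -
    have "suminf (forward_term a c G k) = forward_term a c G k 0 + suminf (\<lambda>j. forward_term a c G k (Suc j))"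
      using suminf_split_head[OF sX[of k]] by simp
    also have "suminf (\<lambda>j. forward_term a c G k (Suc j)) = (of_nat (Suc k) * a ^ k / c) * suminf (forward_term a c G (Suc k))"
      unfolding forward_term_Suc by (rule suminf_mult[OF sX])
    also have "forward_term a c G k 0 = G k" by (simp add: forward_term_def)
    finally have S: "suminf (forward_term a c G k) = G k + of_nat (Suc k) * a ^ k / c * suminf (forward_term a c G (Suc k))" .
    show ?thesis using c unfolding e_def S by (simp add: field_simps del: of_nat_Suc)
  qed
  moreover have "cmod (e k) * w k \<le> B / (cmod c * (1 - q))" for k
  proof -
    have "cmod (suminf (forward_term a c G k)) \<le> (\<Sum>j. B / w k * q ^ j)"
      by (rule norm_suminf_le[OF Xb gs])
    also have "\<dots> = B / w k / (1 - q)"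
    proof -
      have "(\<Sum>j. B / w k * q ^ j) = B / w k * (\<Sum>j. q ^ j)"
        using q by (intro suminf_mult summable_geometric) auto
      also have "(\<Sum>j. q ^ j) = 1 / (1 - q)" using q by (intro suminf_geometric) auto
      finally show ?thesis by simp
    qed
    finally have X: "cmod (suminf (forward_term a c G k)) \<le> B / w k / (1 - q)" .
    have "cmod (e k) * w k = cmod (suminf (forward_term a c G k)) * w k / cmod c"
      unfolding e_def by (simp add: norm_divide)
    also have "\<dots> \<le> (B / w k / (1 - q)) * w k / cmod c"
      using w[of k] by (intro divide_right_mono mult_right_mono X) auto
    also have "\<dots> = B / (cmod c * (1 - q))" using w[of k] q c by (simp add: field_simps)
    finally show ?thesis .
  qed
  ultimately show ?thesis by blast
qed

lemma forward_eqn_unique: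
  assumes c: "c \<noteq> 0" and q: "0 \<le> q" "q < 1" and w: "\<And>k. w k > 0"
    and ratio: "\<And>k. of_nat (Suc k) * cmod a ^ k * w k \<le> q * cmod c * w (Suc k)"
    and d: "\<And>k. c * d k = of_nat (Suc k) * a ^ k * d (Suc k)"
    and C: "\<And>k. cmod (d k) * w k \<le> C"
  shows "d k = 0"
proof -
  have "\<forall>k. cmod (d k) * w k \<le> C * q ^ j" for j
  proof (induction j)
    case 0 then show ?case using C by simp
  next
    case (Suc j)
    show ?case
    proof
      fix k
      have dk: "d k = of_nat (Suc k) * a ^ k * d (Suc k) / c"
        using d[of k] c by (simp add: eq_divide_eq mult.commute)
      have "cmod (d k) = real (Suc k) * cmod a ^ k * cmod (d (Suc k)) / cmod c"
        by (subst dk) (simp only: norm_mult norm_divide norm_power norm_of_nat)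
      then have "cmod (d k) * w k = (of_nat (Suc k) * cmod a ^ k * w k) * cmod (d (Suc k)) / cmod c"
        by (simp add: field_simps del: of_nat_Suc)
      also have "\<dots> \<le> (q * cmod c * w (Suc k)) * cmod (d (Suc k)) / cmod c"
        by (intro divide_right_mono mult_right_mono ratio) auto
      also have "\<dots> = q * (cmod (d (Suc k)) * w (Suc k))" using c by simp
      also have "\<dots> \<le> q * (C * q ^ j)" using Suc q by (intro mult_left_mono) auto
      finally show "cmod (d k) * w k \<le> C * q ^ Suc j" by (simp add: algebra_simps)
    qed
  qed
  then have all: "cmod (d k) * w k \<le> C * q ^ j" for j by blast
  show "d k = 0"
  proof (rule ccontr)
    assume "d k \<noteq> 0"
    then have pos: "cmod (d k) * w k > 0" using w[of k] by simp
    have C0: "C \<ge> 0" using C[of k] pos by linarith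
    show False
    proof (cases "C = 0")
      case True then show False using all[of 0] pos by simp
    next
      case False
      then have "C > 0" using C0 by simp
      obtain j where "q ^ j < cmod (d k) * w k / C"
        using real_arch_pow_inv[of "cmod (d k) * w k / C" q] pos \<open>C > 0\<close> q by auto
      then have "C * q ^ j < cmod (d k) * w k" using \<open>C > 0\<close> by (simp add: field_simps)
      then show False using all[of j] by simp
    qed
  qed
qed


lemma Suc_div_less:
  assumes M: "M \<ge> 2" and k: "k \<ge> 1" "M dvd k" and nk: "\<not> (M = 2 \<and> k = 2)"
  shows "k div M + 1 < (k::nat)"
proof -
  obtain m where km: "k = M * m" using k by blast
  have m: "m \<ge> 1" using k km by (cases m) auto
  have kd: "k div M = m" using km M by simp
  show ?thesis
  proof (cases "M = 2")
    case True
    then have "m \<noteq> 1" using nk km by auto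
    then show ?thesis using kd km True m by simp
  next
    case False
    then have "M \<ge> 3" using M by simp
    then have "M * m \<ge> 3 * m" by simp
    then show ?thesis using kd km m by linarith
  qed
qed

function backward_solution :: "nat \<Rightarrow> complex \<Rightarrow> complex \<Rightarrow> (nat \<Rightarrow> complex) \<Rightarrow> nat \<Rightarrow> complex" where
  "backward_solution M a c G k = (if k = 0 then (backward_solution M a c G 1 - G 0) / c
     else if M dvd k \<and> 2 \<le> M \<and> \<not> (M = 2 \<and> k = 2)
       then (of_nat (k div M + 1) * a ^ (k div M) * backward_solution M a c G (k div M + 1) - G k) / c
     else if M = 2 \<and> k = 2 then - G 2 / (c - 2 * a)
     else - G k / c)"
  by pat_completeness auto
termination
  by (relation "Wellfounded.measure (\<lambda>(M, a, c, G, k :: nat). if k = 0 then 2 else k)")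
     (auto intro!: Suc_div_less[simplified])

declare backward_solution.simps[simp del]

lemma backward_solution_eqn:
  assumes c: "c \<noteq> 0" and M: "M \<ge> 2" and c2: "M = 2 \<longrightarrow> c \<noteq> 2 * a"
  shows "c * backward_solution M a c G k = Dphi_coeff M a (backward_solution M a c G) k - G k"
proof -
  consider "k = 0" | "k \<noteq> 0" "M dvd k" "\<not> (M = 2 \<and> k = 2)" | "M = 2" "k = 2" | "k \<noteq> 0" "\<not> M dvd k"
    by blast
  then show ?thesis
  proof cases
    case 1
    then show ?thesis using c by (subst backward_solution.simps) (simp add: Dphi_coeff_def)
  next
    case 2
    then show ?thesis using c M by (subst backward_solution.simps) (simp add: Dphi_coeff_def)
  next
    case 3
    then have ne: "c - 2 * a \<noteq> 0" using c2 by simp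
    have s: "backward_solution M a c G k = - G 2 / (c - 2 * a)" using 3 by (subst backward_solution.simps) simp
    have dd: "Dphi_coeff M a (backward_solution M a c G) k = 2 * a * backward_solution M a c G k"
      using 3 by (simp add: Dphi_coeff_def eval_nat_numeral)
    have "(c - 2 * a) * backward_solution M a c G k = - G 2" using ne s by simp
    then show ?thesis unfolding dd using 3 by (simp add: algebra_simps)
  next
    case 4
    then have "\<not> (M = 2 \<and> k = 2)" by auto
    then show ?thesis using c 4 by (subst backward_solution.simps) (auto simp: Dphi_coeff_def)
  qed
qed

lemma norm_backward_step_le:
  fixes x y :: complex
  assumes c: "c \<noteq> 0" and q: "0 \<le> q" and w: "w > 0" and B: "B \<ge> 0"
    and ratio: "of_nat n * cmod a ^ m * w \<le> q * cmod c * w'"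
    and y: "cmod y * w \<le> B" and x: "cmod x * w' \<le> B * K" and K: "1 / cmod c \<le> K - q * K"
  shows "cmod ((of_nat n * a ^ m * x - y) / c) * w \<le> B * K"
proof -
  have "cmod ((of_nat n * a ^ m * x - y) / c) * w \<le> (of_nat n * cmod a ^ m * cmod x + cmod y) * w / cmod c"
  proof -
    have "cmod (of_nat n * a ^ m * x - y) \<le> of_nat n * cmod a ^ m * cmod x + cmod y"
      by (rule order_trans[OF norm_triangle_ineq4]) (simp add: norm_mult norm_power)
    then show ?thesis using w by (simp add: norm_divide divide_right_mono mult_right_mono)
  qed
  also have "\<dots> = (of_nat n * cmod a ^ m * w) * cmod x / cmod c + cmod y * w / cmod c"
    by (simp add: algebra_simps add_divide_distrib)
  also have "\<dots> \<le> (q * cmod c * w') * cmod x / cmod c + B / cmod c"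
    using ratio y by (intro add_mono divide_right_mono mult_right_mono) auto
  also have "\<dots> = q * (cmod x * w') + B * (1 / cmod c)" using c by simp
  also have "\<dots> \<le> q * (B * K) + B * (K - q * K)"
    using x q B K by (intro add_mono mult_left_mono) auto
  also have "\<dots> = B * K" by (simp add: algebra_simps)
  finally show ?thesis .
qed

lemma backward_solution_bound:
  assumes c: "c \<noteq> 0" and M: "M \<ge> 2" and q: "0 \<le> q" "q < 1" and w: "\<And>k. w k > 0"
    and ratio: "\<And>k. 1 \<le> k \<Longrightarrow> M dvd k \<Longrightarrow> \<not> (M = 2 \<and> k = 2) \<Longrightarrow>
        of_nat (k div M + 1) * cmod a ^ (k div M) * w k \<le> q * cmod c * w (k div M + 1)"
    and G: "\<And>n. cmod (G n) * w n \<le> B"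
    and K: "K = 1 / (cmod c * (1 - q)) + 1 / cmod (c - 2 * a)"
  shows "k \<ge> 1 \<Longrightarrow> cmod (backward_solution M a c G k) * w k \<le> B * K"
proof (induction k rule: less_induct)
  case (less k)
  have B0: "B \<ge> 0" using G[of 0] w[of 0] by (meson mult_nonneg_nonneg norm_ge_zero less_imp_le order_trans)
  have K1: "1 / cmod c \<le> K - q * K"
  proof -
    have "1 / cmod c = (1 / (cmod c * (1 - q))) * (1 - q)" using q c by (simp add: field_simps)
    also have "\<dots> \<le> K * (1 - q)" using q K by (intro mult_right_mono) auto
    finally show ?thesis by (simp add: algebra_simps)
  qed
  have K0: "K \<ge> 0" using K q by auto
  consider "M dvd k" "\<not> (M = 2 \<and> k = 2)" | "M = 2" "k = 2" | "\<not> M dvd k" by blast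
  then show ?case
  proof cases
    case 1
    define n where "n = k div M + 1"
    have nk: "n < k" unfolding n_def using Suc_div_less[OF M less.prems 1(1) 1(2)] .
    have n1: "n \<ge> 1" unfolding n_def by simp
    have IH: "cmod (backward_solution M a c G n) * w n \<le> B * K" using less.IH[OF nk n1] .
    have "backward_solution M a c G k = (of_nat n * a ^ (k div M) * backward_solution M a c G n - G k) / c"
      using 1 less.prems M by (subst backward_solution.simps) (simp add: n_def)
    then show ?thesis
      using norm_backward_step_le[OF c q(1) w B0 ratio[OF less.prems 1(1) 1(2), folded n_def] G IH K1]
      by simp
  next
    case 2
    have e: "backward_solution M a c G k = - G 2 / (c - 2 * a)" using 2 by (subst backward_solution.simps) simp
    have "cmod (backward_solution M a c G k) * w k = cmod (G k) * w k / cmod (c - 2 * a)"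
      unfolding e using 2 by (simp add: norm_divide)
    also have "\<dots> \<le> B / cmod (c - 2 * a)" using G[of k] by (intro divide_right_mono) auto
    also have "\<dots> \<le> B * K" using K q c B0
      by (simp add: divide_inverse mult_left_mono)
    finally show ?thesis .
  next
    case 3
    have e: "backward_solution M a c G k = - G k / c" using 3 less.prems by (subst backward_solution.simps) auto
    have "cmod (backward_solution M a c G k) * w k = cmod (G k) * w k / cmod c"
      unfolding e by (simp add: norm_divide)
    also have "\<dots> \<le> B / cmod c" using G[of k] by (intro divide_right_mono) auto
    also have "\<dots> = B * (1 / cmod c)" by simp
    also have "\<dots> \<le> B * K"
    proof -
      have "q * K \<ge> 0" using q K0 by simp
      then have "1 / cmod c \<le> K" using K1 by linarith
      then show ?thesis using B0 by (intro mult_left_mono) auto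
    qed
    finally show ?thesis .
  qed
qed

lemma backward_eqn_unique:
  assumes c: "c \<noteq> 0" and M: "M \<ge> 2" and c2: "M = 2 \<longrightarrow> c \<noteq> 2 * a"
    and d: "\<And>k. c * d k = Dphi_coeff M a d k"
  shows "d k = 0"
proof -
  have pos: "k \<ge> 1 \<Longrightarrow> d k = 0" for k
  proof (induction k rule: less_induct)
    case (less k)
    consider "M dvd k" "\<not> (M = 2 \<and> k = 2)" | "M = 2" "k = 2" | "\<not> M dvd k" by blast
    then show ?case
    proof cases
      case 1
      have nk: "k div M + 1 < k" using Suc_div_less[OF M less.prems 1(1) 1(2)] .
      have "d (k div M + 1) = 0" using less.IH[OF nk] by simp
      then show ?thesis using d[of k] c 1 by (simp add: Dphi_coeff_def)
    next
      case 2
      have "c * d 2 = 2 * a * d 2" using d[of 2] 2 by (simp add: Dphi_coeff_def eval_nat_numeral)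
      then have "(c - 2 * a) * d 2 = 0" by (simp add: algebra_simps)
      then show ?thesis using 2 c2 by simp
    next
      case 3
      then show ?thesis using d[of k] c by (simp add: Dphi_coeff_def)
    qed
  qed
  show ?thesis
  proof (cases "k = 0")
    case True
    have "c * d 0 = d 1" using d[of 0] by (simp add: Dphi_coeff_def)
    then show ?thesis using pos[of 1] c True by simp
  qed (use pos in auto)
qed
lemma Suc_times_power_tendsto_0:
  fixes r :: real assumes "0 \<le> r" "r < 1"
  shows "(\<lambda>n. real (Suc n) * r ^ n) \<longlonglongrightarrow> 0"
proof -
  have "(\<lambda>n. of_nat n * r ^ n) \<longlonglongrightarrow> 0" using powser_times_n_limit_0[of r] assms by simp
  moreover have "(\<lambda>n. r ^ n) \<longlonglongrightarrow> 0" using assms by (intro LIMSEQ_power_zero) auto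
  ultimately have "(\<lambda>n. of_nat n * r ^ n + r ^ n) \<longlonglongrightarrow> 0 + 0" by (rule tendsto_add)
  then show ?thesis by (simp add: algebra_simps)
qed

locale resolvent_data =
  fixes a c :: complex and M :: nat and R :: real
  assumes a0: "0 < cmod a" and aR: "cmod a < R" and R1: "R < 1" and M1: "M \<ge> 1"
    and c0: "c \<noteq> 0" and c2: "M = 2 \<longrightarrow> c \<noteq> 2 * a"
begin

lemma R_pos: "R > 0" by (rule less_trans[OF _ aR]) (use a0 in simp)

text \<open>The weights differ from \<open>R\<^sup>k\<close> by factors bounded above and below, since
  \<open>(k+1)|a|\<^sup>k \<rightarrow> 0\<close>, and satisfy the ratio hypotheses of \<open>forward_eqn_solvable\<close> and
  \<open>backward_solution_bound\<close> with \<open>q = 1/2\<close>.\<close>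

definition "growth1 i = real (Suc i) * cmod a ^ i / (1/2 * cmod c * R)"
definition "gain1 n = (\<Prod>i<n. max 1 (growth1 i))"
definition "weight1 n = R ^ n * gain1 n"

lemma gain1_ge_1: "gain1 n \<ge> 1" unfolding gain1_def by (rule prod_max_one_ge_1)

lemma gain1_bounded: "\<exists>U. \<forall>n. gain1 n \<le> U"
proof -
  have "(\<lambda>i. real (Suc i) * cmod a ^ i / (1/2 * cmod c * R)) \<longlonglongrightarrow> 0 / (1/2 * cmod c * R)"
    using a0 aR R1 c0 R_pos by (intro tendsto_divide Suc_times_power_tendsto_0) auto
  then have "eventually (\<lambda>i. growth1 i \<le> 1) sequentially"
    unfolding growth1_def by (rule eventually_mono[OF order_tendstoD(2)[where a = 1]]) auto
  from prod_max_one_bounded[OF this] show ?thesis unfolding gain1_def by blast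
qed

lemma weight1_pos: "weight1 n > 0" unfolding weight1_def using R_pos gain1_ge_1[of n] by simp

lemma weight1_ratio: "of_nat (Suc k) * cmod a ^ k * weight1 k \<le> 1/2 * cmod c * weight1 (Suc k)"
proof -
  have e: "1/2 * cmod c * R * growth1 k = real (Suc k) * cmod a ^ k" unfolding growth1_def using c0 R_pos by simp
  have "of_nat (Suc k) * cmod a ^ k * weight1 k = (1/2 * cmod c * R * growth1 k) * (R ^ k * gain1 k)"
    unfolding weight1_def e by simp
  also have "\<dots> \<le> (1/2 * cmod c * R * max 1 (growth1 k)) * (R ^ k * gain1 k)"
    using R_pos gain1_ge_1[of k] by (intro mult_right_mono mult_left_mono) auto
  also have "\<dots> = 1/2 * cmod c * weight1 (Suc k)" unfolding weight1_def gain1_def by (simp add: algebra_simps)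
  finally show ?thesis .
qed

definition "growth2 j = real j * cmod a ^ j / (cmod a * (1/2) * cmod c)"
definition "gain2 n = (\<Prod>i<n. max 1 (growth2 i))"
definition "weight2 n = R ^ n / gain2 n"

lemma gain2_ge_1: "gain2 n \<ge> 1" unfolding gain2_def by (rule prod_max_one_ge_1)

lemma gain2_mono: "m \<le> n \<Longrightarrow> gain2 m \<le> gain2 n" unfolding gain2_def by (rule prod_max_one_mono)

lemma gain2_bounded: "\<exists>V. \<forall>n. gain2 n \<le> V"
proof -
  have "(\<lambda>j. real j * cmod a ^ j / (cmod a * (1/2) * cmod c)) \<longlonglongrightarrow> 0 / (cmod a * (1/2) * cmod c)"
    using a0 aR R1 c0 powser_times_n_limit_0[of "cmod a"] by (intro tendsto_divide) auto
  then have "eventually (\<lambda>i. growth2 i \<le> 1) sequentially"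
    unfolding growth2_def by (rule eventually_mono[OF order_tendstoD(2)[where a = 1]]) auto
  from prod_max_one_bounded[OF this] show ?thesis unfolding gain2_def by blast
qed

lemma weight2_pos: "weight2 n > 0" unfolding weight2_def using R_pos gain2_ge_1[of n] by simp

lemma weight2_ratio:
  assumes M2: "M \<ge> 2" and k: "1 \<le> k" "M dvd k" "\<not> (M = 2 \<and> k = 2)"
  shows "of_nat (k div M + 1) * cmod a ^ (k div M) * weight2 k \<le> 1/2 * cmod c * weight2 (k div M + 1)"
proof -
  define i where "i = k div M"
  have ki: "i + 2 \<le> k" using Suc_div_less[OF M2 k] unfolding i_def by simp
  have e: "of_nat (i + 1) * cmod a ^ i = 1/2 * cmod c * growth2 (Suc i)"
    unfolding growth2_def using a0 c0 by (simp add: field_simps)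
  have "weight2 k \<le> R ^ (i + 1) / gain2 (i + 2)"
  proof -
    have "R ^ k \<le> R ^ (i + 1)" using ki R_pos R1 by (intro power_decreasing) auto
    moreover have "gain2 (i + 2) \<le> gain2 k" using ki by (rule gain2_mono)
    ultimately show ?thesis unfolding weight2_def using R_pos gain2_ge_1[of "i+2"]
      by (intro frac_le) auto
  qed
  also have "gain2 (i + 2) = gain2 (i + 1) * max 1 (growth2 (Suc i))" unfolding gain2_def by simp
  finally have wk: "weight2 k \<le> R ^ (i + 1) / (gain2 (i + 1) * max 1 (growth2 (Suc i)))" .
  have "of_nat (i + 1) * cmod a ^ i * weight2 k
        \<le> (1/2 * cmod c * growth2 (Suc i)) * (R ^ (i + 1) / (gain2 (i + 1) * max 1 (growth2 (Suc i))))"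
    unfolding e by (intro mult_left_mono wk) (auto simp: growth2_def)
  also have "\<dots> \<le> (1/2 * cmod c * max 1 (growth2 (Suc i)))
                  * (R ^ (i + 1) / (gain2 (i + 1) * max 1 (growth2 (Suc i))))"
    using R_pos gain2_ge_1[of "i+1"] by (intro mult_right_mono mult_left_mono) auto
  also have "\<dots> = 1/2 * cmod c * weight2 (i + 1)" unfolding weight2_def by (simp add: field_simps)
  finally show ?thesis unfolding i_def by simp
qed

definition "coeff_eqn G e \<longleftrightarrow> (\<forall>k. c * e k = Dphi_coeff M a e k - G k)"

lemma coeff_eqn_solvable_forward:
  assumes M: "M = 1" and U: "\<And>n. gain1 n \<le> U" and G: "\<And>n. cmod (G n) * R ^ n \<le> B"
  shows "\<exists>e. coeff_eqn G e \<and> (\<forall>k. cmod (e k) * R ^ k \<le> 2 * U / cmod c * B)"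
proof -
  have B0: "B \<ge> 0" using G[of 0] norm_ge_zero[of "G 0"] by (simp del: norm_ge_zero)
  have Gw: "cmod (G n) * weight1 n \<le> B * U" for n
  proof -
    have "cmod (G n) * weight1 n = (cmod (G n) * R ^ n) * gain1 n" unfolding weight1_def by simp
    also have "\<dots> \<le> B * U" using G[of n] U[of n] gain1_ge_1[of n] B0 by (intro mult_mono) auto
    finally show ?thesis .
  qed
  obtain e where e1: "\<forall>k. c * e k = of_nat (Suc k) * a ^ k * e (Suc k) - G k"
    and e2: "\<forall>k. cmod (e k) * weight1 k \<le> B * U / (cmod c * (1 - 1/2))"
    using forward_eqn_solvable[OF c0 _ _ weight1_pos weight1_ratio Gw] by auto
  have "Dphi_coeff M a e k = of_nat (Suc k) * a ^ k * e (Suc k)" for k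
    using Dphi_coeff_1 M by simp
  with e1 have "coeff_eqn G e" unfolding coeff_eqn_def by simp
  moreover have "cmod (e k) * R ^ k \<le> 2 * U / cmod c * B" for k
  proof -
    have "cmod (e k) * R ^ k \<le> cmod (e k) * weight1 k"
      unfolding weight1_def using gain1_ge_1[of k] R_pos
      by (intro mult_left_mono) (auto simp: mult_le_cancel_left1)
    also have "\<dots> \<le> 2 * U / cmod c * B" using e2 by (simp add: field_simps)
    finally show ?thesis .
  qed
  ultimately show ?thesis by blast
qed

text \<open>The recursion defining \<open>backward_solution\<close> does not reach \<open>e\<^sub>0\<close>, which is recovered
  from the row \<open>c e\<^sub>0 = e\<^sub>1 - G\<^sub>0\<close>.\<close>

lemma coeff_eqn_solvable_backward:
  assumes M2: "M \<ge> 2" and V: "\<And>n. gain2 n \<le> V" and G: "\<And>n. cmod (G n) * R ^ n \<le> B"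
  defines "K \<equiv> 1 / (cmod c * (1 - 1/2)) + 1 / cmod (c - 2 * a)"
  shows "\<exists>e. coeff_eqn G e \<and> (\<forall>k. cmod (e k) * R ^ k \<le> (K * V + (K * V / R + 1) / cmod c) * B)"
proof -
  have B0: "B \<ge> 0" using G[of 0] norm_ge_zero[of "G 0"] by (simp del: norm_ge_zero)
  have V1: "V \<ge> 1" using V[of 0] gain2_ge_1[of 0] by simp
  have K0: "K \<ge> 0" unfolding K_def by simp
  have Gw: "cmod (G n) * weight2 n \<le> B" for n
  proof -
    have "cmod (G n) * weight2 n = (cmod (G n) * R ^ n) / gain2 n" unfolding weight2_def by simp
    also have "\<dots> \<le> cmod (G n) * R ^ n / 1" using gain2_ge_1[of n] R_pos
      by (intro divide_left_mono) auto
    also have "\<dots> \<le> B" using G[of n] by simp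
    finally show ?thesis .
  qed
  define e where "e = backward_solution M a c G"
  have eqn: "coeff_eqn G e" unfolding coeff_eqn_def e_def using backward_solution_eqn[OF c0 M2 c2] by blast
  have pos: "cmod (e k) * R ^ k \<le> K * V * B" if k: "k \<ge> 1" for k
  proof -
    have b: "cmod (e k) * weight2 k \<le> B * K" unfolding e_def
      by (rule backward_solution_bound[OF c0 M2 _ _ weight2_pos weight2_ratio[OF M2] Gw meta_eq_to_obj_eq[OF K_def] k]) auto
    have "cmod (e k) * R ^ k = (cmod (e k) * weight2 k) * gain2 k"
      unfolding weight2_def using gain2_ge_1[of k] by simp
    also have "\<dots> \<le> (B * K) * V"
      by (rule mult_mono[OF b V[of k]]) (use gain2_ge_1[of k] B0 K0 in auto)
    finally show ?thesis by (simp add: algebra_simps)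
  qed
  have "cmod (e k) * R ^ k \<le> (K * V + (K * V / R + 1) / cmod c) * B" for k
  proof (cases "k = 0")
    case False
    then have "cmod (e k) * R ^ k \<le> K * V * B" using pos by simp
    also have "\<dots> \<le> (K * V + (K * V / R + 1) / cmod c) * B"
      using B0 K0 V1 R_pos c0 by (intro mult_right_mono) auto
    finally show ?thesis .
  next
    case True
    have e0: "c * e 0 = e 1 - G 0" using eqn unfolding coeff_eqn_def by (auto simp: Dphi_coeff_def)
    have "cmod c * cmod (e 0) \<le> cmod (e 1) + cmod (G 0)"
      using arg_cong[OF e0, of cmod] norm_triangle_ineq4[of "e 1" "G 0"] by (simp add: norm_mult)
    also have "\<dots> \<le> K * V * B / R + B"
    proof -
      have "cmod (e 1) \<le> K * V * B / R" using pos[of 1] R_pos by (simp add: field_simps)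
      then show ?thesis using G[of 0] by simp
    qed
    finally have "cmod (e 0) \<le> (K * V / R + 1) / cmod c * B" using c0 by (simp add: field_simps)
    also have "\<dots> \<le> (K * V + (K * V / R + 1) / cmod c) * B"
      using B0 K0 V1 by (intro mult_right_mono) auto
    finally show ?thesis using True by simp
  qed
  with eqn show ?thesis by blast
qed

lemma coeff_eqn_solvable:
  obtains K0 where "\<And>G B. (\<And>n. cmod (G n) * R ^ n \<le> B) \<Longrightarrow>
           \<exists>e. coeff_eqn G e \<and> (\<forall>k. cmod (e k) * R ^ k \<le> K0 * B)"
proof (cases "M = 1")
  case True
  obtain U where U: "\<And>n. gain1 n \<le> U" using gain1_bounded by blast
  show ?thesis using that coeff_eqn_solvable_forward[OF True U] by blast
next
  case False
  then have M2: "M \<ge> 2" using M1 by simp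
  obtain V where V: "\<And>n. gain2 n \<le> V" using gain2_bounded by blast
  show ?thesis using that coeff_eqn_solvable_backward[OF M2 V] by blast
qed

lemma coeff_eqn_unique:
  assumes e: "coeff_eqn G e" and e': "coeff_eqn G e'" and C: "\<And>k. cmod (e k - e' k) * R ^ k \<le> C"
  shows "e = e'"
proof -
  define d where "d = (\<lambda>k. e k - e' k)"
  have d: "c * d k = Dphi_coeff M a d k" for k
  proof -
    have "c * d k = c * e k - c * e' k" by (simp add: d_def algebra_simps)
    also have "\<dots> = Dphi_coeff M a e k - Dphi_coeff M a e' k" using e e' unfolding coeff_eqn_def by simp
    also have "\<dots> = Dphi_coeff M a d k" unfolding d_def by (rule Dphi_coeff_diff[symmetric])
    finally show ?thesis .
  qed
  have "d k = 0" for k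
  proof (cases "M = 1")
    case True
    obtain U where U: "\<And>n. gain1 n \<le> U" using gain1_bounded by blast
    have "cmod (e 0 - e' 0) \<le> C" using C[of 0] by simp
    then have C0: "C \<ge> 0" using norm_ge_zero[of "e 0 - e' 0"] by linarith
    show ?thesis
    proof (rule forward_eqn_unique[OF c0 _ _ weight1_pos weight1_ratio])
      show "c * d k = of_nat (Suc k) * a ^ k * d (Suc k)" for k using d[of k] unfolding True Dphi_coeff_1 .
      show "cmod (d k) * weight1 k \<le> C * U" for k
      proof -
        have "cmod (d k) * weight1 k = (cmod (d k) * R ^ k) * gain1 k" unfolding weight1_def by simp
        also have "\<dots> \<le> C * U" using C[of k] U[of k] gain1_ge_1[of k] C0 unfolding d_def
          by (intro mult_mono) auto
        finally show ?thesis .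
      qed
    qed auto
  next
    case False
    then have "M \<ge> 2" using M1 by simp
    then show ?thesis using backward_eqn_unique[OF c0 _ c2 d] by simp
  qed
  then show ?thesis unfolding d_def by (simp add: fun_eq_iff)
qed

end

lemma summable_Suc_times_power:
  fixes x :: real assumes "0 \<le> x" "x < 1"
  shows "summable (\<lambda>n. real (Suc n) * x ^ n)"
proof -
  have "summable (\<lambda>n. diffs (\<lambda>_. 1::real) n * x ^ n)"
    by (rule termdiff_converges[of x 1]) (use assms in \<open>auto intro: summable_geometric\<close>)
  then show ?thesis by (simp add: diffs_def)
qed

lemma summable_Suc_Suc_times_power:
  fixes x :: real assumes "0 \<le> x" "x < 1"
  shows "summable (\<lambda>n. real (Suc n) * real (Suc (Suc n)) * x ^ n)"
proof -
  have "summable (\<lambda>n. diffs (\<lambda>n. real (Suc n)) n * x ^ n)"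
  proof (rule termdiff_converges[of x 1])
    fix y :: real assume "norm y < 1"
    then show "summable (\<lambda>n. real (Suc n) * y ^ n)"
      using summable_Suc_times_power[of "\<bar>y\<bar>"] summable_rabs_cancel
      by (auto simp: abs_mult power_abs)
  qed (use assms in auto)
  then show ?thesis by (simp add: diffs_def mult_ac)
qed

definition second_deriv_factor :: "real \<Rightarrow> real \<Rightarrow> real" where
  "second_deriv_factor R \<rho> = (\<Sum>n. real (Suc n) * real (Suc (Suc n)) * (\<rho> / R) ^ n) / R ^ 2"

lemma second_deriv_factor_nonneg:
  assumes "0 \<le> \<rho>" "\<rho> < R"
  shows "second_deriv_factor R \<rho> \<ge> 0"
proof -
  have x: "0 \<le> \<rho> / R" "\<rho> / R < 1" using assms by auto
  have "0 \<le> (\<Sum>n. real (Suc n) * real (Suc (Suc n)) * (\<rho> / R) ^ n)"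
    by (rule suminf_nonneg[OF summable_Suc_Suc_times_power[OF x]]) (use x in simp)
  then show ?thesis unfolding second_deriv_factor_def by simp
qed

lemma norm_second_deriv_le:
  assumes F: "F holomorphic_on ball 0 1" and E: "\<And>k. cmod (taylor_coeff F k) * R ^ k \<le> E"
    and w: "cmod w \<le> \<rho>" and \<rho>R: "\<rho> < R" "R \<le> 1"
  shows "cmod (deriv (deriv F) w) \<le> E * second_deriv_factor R \<rho>"
proof -
  have R0: "R > 0" using w \<rho>R norm_ge_zero[of w] by linarith
  have wb: "w \<in> ball 0 1" using w \<rho>R by simp
  have E0: "E \<ge> 0" using E[of 0] norm_ge_zero[of "taylor_coeff F 0"] by (simp del: norm_ge_zero)
  have "0 \<le> \<rho>" using w norm_ge_zero[of w] by linarith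
  then have x: "0 \<le> \<rho> / R" "\<rho> / R < 1" using R0 \<rho>R by auto
  have S: "(\<lambda>n. taylor_coeff (deriv (deriv F)) n * w ^ n) sums deriv (deriv F) w"
    by (rule taylor_coeff_sums[OF _ wb]) (intro holomorphic_deriv F; simp)
  have tb: "cmod (taylor_coeff (deriv (deriv F)) n * w ^ n)
              \<le> E / R ^ 2 * (real (Suc n) * real (Suc (Suc n)) * (\<rho> / R) ^ n)" for n
  proof -
    have c2: "taylor_coeff (deriv (deriv F)) n
                = of_nat (Suc n) * of_nat (Suc (Suc n)) * taylor_coeff F (Suc (Suc n))"
      unfolding taylor_coeff_deriv by (simp add: algebra_simps)
    have Eb: "cmod (taylor_coeff F (Suc (Suc n))) \<le> E / R ^ Suc (Suc n)"
      using E[of "Suc (Suc n)"] R0 by (simp add: field_simps)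
    have "cmod (taylor_coeff (deriv (deriv F)) n * w ^ n)
          = real (Suc n) * real (Suc (Suc n)) * cmod (taylor_coeff F (Suc (Suc n))) * cmod w ^ n"
      unfolding c2 by (simp only: norm_mult norm_power norm_of_nat)
    also have "\<dots> \<le> real (Suc n) * real (Suc (Suc n)) * (E / R ^ Suc (Suc n)) * \<rho> ^ n"
      by (intro mult_mono mult_left_mono Eb power_mono w) (use E0 R0 in auto)
    also have "\<dots> = E / R ^ 2 * (real (Suc n) * real (Suc (Suc n)) * (\<rho> / R) ^ n)"
      using R0 by (simp add: field_simps power_divide power2_eq_square)
    finally show ?thesis .
  qed
  have "cmod (deriv (deriv F) w)
        \<le> (\<Sum>n. E / R ^ 2 * (real (Suc n) * real (Suc (Suc n)) * (\<rho> / R) ^ n))"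
    using norm_suminf_le[OF tb] summable_mult[OF summable_Suc_Suc_times_power[OF x]] sums_unique[OF S]
    by simp
  also have "\<dots> = E * second_deriv_factor R \<rho>"
    unfolding second_deriv_factor_def
    using suminf_mult[OF summable_Suc_Suc_times_power[OF x], of "E / R ^ 2"] by simp
  finally show ?thesis .
qed

lemma summable_deriv_series_weighted:
  fixes e :: "nat \<Rightarrow> complex"
  assumes R: "R > 0" and E: "\<And>k. cmod (e k) * R ^ k \<le> E" and w: "cmod w < R"
  shows "summable (\<lambda>n. of_nat (Suc n) * e (Suc n) * w ^ n)"
proof (rule summable_comparison_test')
  have x: "0 \<le> cmod w / R" "cmod w / R < 1" using w R by auto
  show "summable (\<lambda>n. E / R * (real (Suc n) * (cmod w / R) ^ n))"
    by (intro summable_mult summable_Suc_times_power x)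
  fix n :: nat
  have eb: "cmod (e (Suc n)) \<le> E / R ^ Suc n" using E[of "Suc n"] R by (simp add: field_simps)
  have "cmod (of_nat (Suc n) * e (Suc n) * w ^ n) = real (Suc n) * cmod (e (Suc n)) * cmod w ^ n"
    by (simp only: norm_mult norm_power norm_of_nat)
  also have "\<dots> \<le> real (Suc n) * (E / R ^ Suc n) * cmod w ^ n"
    by (intro mult_right_mono mult_left_mono eb) auto
  also have "\<dots> = E / R * (real (Suc n) * (cmod w / R) ^ n)"
    unfolding power_divide power_Suc by (simp add: divide_inverse inverse_mult_distrib ac_simps)
  finally show "norm (of_nat (Suc n) * e (Suc n) * w ^ n) \<le> E / R * (real (Suc n) * (cmod w / R) ^ n)" .
qed

section \<open>Invertibility of \<open>D\<^sub>\<phi> - c\<close>\<close>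

context resolvent_data
begin

abbreviation resolvent :: "(complex \<Rightarrow> complex) \<Rightarrow> complex \<Rightarrow> complex" where
  "resolvent \<equiv> \<lambda>f z. Dphi (\<lambda>z. a * z ^ M) f z - c * f z"

lemma norm_a_less_1: "cmod a < 1" using aR R1 by simp

lemma norm_taylor_coeff_le_circle_mean_R:
  "f holomorphic_on ball 0 1 \<Longrightarrow> cmod (taylor_coeff f k) * R ^ k \<le> circle_mean f R"
  using norm_taylor_coeff_le_circle_mean[of f R k] R_pos R1 by simp

lemma norm_second_deriv_le_R:
  assumes "f holomorphic_on ball 0 1" "\<And>k. cmod (taylor_coeff f k) * R ^ k \<le> E" "cmod w \<le> cmod a"
  shows "cmod (deriv (deriv f) w) \<le> E * second_deriv_factor R (cmod a)"
  using norm_second_deriv_le[OF assms] aR R1 by simp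

lemma resolvent_in_Sp:
  assumes p: "p > 1" and f: "f \<in> Sp p"
  shows "resolvent f \<in> Sp p"
proof -
  note fd = SpD[OF f]
  define H where "H = resolvent f"
  define S where "S = circle_mean f R * second_deriv_factor R (cmod a)"
  have Heq: "H z = 1 * deriv f (a * z ^ M) + (- c) * f z" if "z \<in> ball 0 1" for z
    using that unfolding H_def Dphi_def by simp
  have "0 \<le> circle_mean f R"
    using norm_taylor_coeff_le_circle_mean_R[OF fd(1), of 0] norm_ge_zero[of "taylor_coeff f 0"]
    by (simp del: norm_ge_zero)
  then have S0: "S \<ge> 0" unfolding S_def using second_deriv_factor_nonneg[OF _ aR] by simp
  have Sb: "cmod (deriv (deriv f) w) \<le> S" if "cmod w \<le> cmod a" for w
    unfolding S_def by (rule norm_second_deriv_le_R[OF fd(1) norm_taylor_coeff_le_circle_mean_R[OF fd(1)] that])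
  note hb = hardy_deriv_lincomb_comp_pow[OF p fd(1) norm_a_less_1 fd(1) fd(2) Heq S0 Sb]
  have "disk_fun H" unfolding disk_fun_def using hb(1) fd(3) by (auto simp: H_def Dphi_def)
  then show ?thesis using hb(2) unfolding Sp_def H_def by auto
qed

lemma coeff_eqn_taylor_coeff:
  assumes "f holomorphic_on ball 0 1"
  shows "coeff_eqn (taylor_coeff (resolvent f)) (taylor_coeff f)"
  unfolding coeff_eqn_def
  using taylor_coeff_Dphi_diff[OF assms norm_a_less_1 M1, of "resolvent f" c] by (simp add: Dphi_def)

lemma taylor_coeff_eq_if_resolvent_eq:
  assumes f: "f holomorphic_on ball 0 1" and e: "coeff_eqn (taylor_coeff (resolvent f)) e"
    and E: "\<And>k. cmod (e k) * R ^ k \<le> E"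
  shows "taylor_coeff f = e"
proof (rule coeff_eqn_unique[OF coeff_eqn_taylor_coeff[OF f] e])
  fix k
  have "cmod (taylor_coeff f k - e k) * R ^ k \<le> (cmod (taylor_coeff f k) + cmod (e k)) * R ^ k"
    using R_pos by (intro mult_right_mono norm_triangle_ineq4) auto
  also have "\<dots> \<le> circle_mean f R + E"
    using norm_taylor_coeff_le_circle_mean_R[OF f, of k] E[of k] by (simp add: algebra_simps)
  finally show "cmod (taylor_coeff f k - e k) * R ^ k \<le> circle_mean f R + E" .
qed

lemma inj_on_resolvent: "inj_on resolvent (Sp p)"
proof (rule inj_onI)
  fix f1 f2 assume f1: "f1 \<in> Sp p" and f2: "f2 \<in> Sp p" and eq: "resolvent f1 = resolvent f2"
  have "taylor_coeff f1 = taylor_coeff f2"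
    using taylor_coeff_eq_if_resolvent_eq[OF SpD(1)[OF f1] _ norm_taylor_coeff_le_circle_mean_R]
      coeff_eqn_taylor_coeff[OF SpD(1)[OF f2]] SpD(1)[OF f2] eq
    by metis
  then show "f1 = f2" by (rule Sp_eqI_taylor_coeff[OF f1 f2])
qed

text \<open>The identity \<open>f = (f' \<circ> \<phi> - g)/c\<close> turns decay of the coefficients of \<open>f\<close> into an
  \<open>H\<^sup>p\<close> bound for \<open>f'\<close>.\<close>

lemma hardy_deriv_if_resolvent_eq:
  assumes p: "p > 1" and f: "f holomorphic_on ball 0 1" and g: "g \<in> Sp p" and fg: "resolvent f = g"
    and E: "\<And>k. cmod (taylor_coeff f k) * R ^ k \<le> E"
  shows "deriv f \<in> hardy p"
    "hardy_norm p (deriv f)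
       \<le> 4 * (real M * cmod a * E * second_deriv_factor R (cmod a) + hardy_norm p (deriv g)) / cmod c"
proof -
  note gd = SpD[OF g]
  have E0: "E \<ge> 0" using E[of 0] norm_ge_zero[of "taylor_coeff f 0"] by (simp del: norm_ge_zero)
  define S where "S = E * second_deriv_factor R (cmod a)"
  have S0: "S \<ge> 0" unfolding S_def using E0 second_deriv_factor_nonneg[OF _ aR] by simp
  have Heq: "f z = (1 / c) * deriv f (a * z ^ M) + (- 1 / c) * g z" if "z \<in> ball 0 1" for z
    using that c0 fg unfolding Dphi_def by (auto simp: field_simps)
  have Sb: "cmod (deriv (deriv f) w) \<le> S" if "cmod w \<le> cmod a" for w
    unfolding S_def by (rule norm_second_deriv_le_R[OF f E that])
  note hb = hardy_deriv_lincomb_comp_pow[OF p f norm_a_less_1 gd(1) gd(2) Heq S0 Sb]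
  show "deriv f \<in> hardy p" by (rule hb(2))
  have "hardy_norm p (deriv f)
        \<le> 4 * (cmod (1 / c) * real M * cmod a * S + cmod (- 1 / c) * hardy_norm p (deriv g))"
    by (rule hb(3))
  also have "\<dots> = 4 * (real M * cmod a * S + hardy_norm p (deriv g)) / cmod c"
    by (simp add: norm_divide field_simps add_divide_distrib)
  finally show "hardy_norm p (deriv f)
       \<le> 4 * (real M * cmod a * E * second_deriv_factor R (cmod a) + hardy_norm p (deriv g)) / cmod c"
    unfolding S_def by (simp add: mult.assoc)
qed

lemma resolvent_bounded_below:
  assumes p: "p > 1"
  shows "\<exists>C. \<forall>f\<in>Sp p. Sp_norm p f \<le> C * Sp_norm p (resolvent f)"
proof -
  obtain K0 where solvable: "\<And>G B. (\<And>n. cmod (G n) * R ^ n \<le> B) \<Longrightarrow>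
      \<exists>e. coeff_eqn G e \<and> (\<forall>k. cmod (e k) * R ^ k \<le> K0 * B)"
    using coeff_eqn_solvable by blast
  define C where "C = 2 * K0 + 4 * (real M * cmod a * (2 * K0) * second_deriv_factor R (cmod a) + 1) / cmod c"
  have "Sp_norm p f \<le> C * Sp_norm p (resolvent f)" if f: "f \<in> Sp p" for f
  proof -
    note fd = SpD[OF f]
    define g where "g = resolvent f"
    have g: "g \<in> Sp p" unfolding g_def by (rule resolvent_in_Sp[OF p f])
    define N where "N = Sp_norm p g"
    have N0: "N \<ge> 0" using Sp_norm_ge(1)[of g p] norm_ge_zero[of "g 0"] unfolding N_def by linarith
    obtain e where e1: "coeff_eqn (taylor_coeff g) e" and e2: "\<And>k. cmod (e k) * R ^ k \<le> K0 * (2 * N)"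
      using solvable[OF norm_taylor_coeff_le_Sp_norm[OF g p R_pos R1]] unfolding N_def by blast
    have "taylor_coeff f = e"
      by (rule taylor_coeff_eq_if_resolvent_eq[OF fd(1) _ e2]) (use e1 g_def in simp)
    then have Eb: "cmod (taylor_coeff f k) * R ^ k \<le> 2 * K0 * N" for k using e2[of k] by simp
    have f0: "cmod (f 0) \<le> 2 * K0 * N" using Eb[of 0] unfolding taylor_coeff_def by simp
    have "hardy_norm p (deriv f)
          \<le> 4 * (real M * cmod a * (2 * K0 * N) * second_deriv_factor R (cmod a) + hardy_norm p (deriv g)) / cmod c"
      by (rule hardy_deriv_if_resolvent_eq(2)[OF p fd(1) g g_def[symmetric] Eb])
    also have "\<dots> \<le> 4 * (real M * cmod a * (2 * K0 * N) * second_deriv_factor R (cmod a) + N) / cmod c"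
      using Sp_norm_ge(2)[of p g] unfolding N_def by (intro divide_right_mono mult_left_mono add_left_mono) auto
    also have "\<dots> = 4 * (real M * cmod a * (2 * K0) * second_deriv_factor R (cmod a) + 1) / cmod c * N"
      by (simp add: algebra_simps)
    finally have "Sp_norm p f \<le> 2 * K0 * N + 4 * (real M * cmod a * (2 * K0) * second_deriv_factor R (cmod a) + 1) / cmod c * N"
      unfolding Sp_norm_def using f0 by simp
    also have "\<dots> = C * N" unfolding C_def by (simp add: algebra_simps)
    finally show ?thesis unfolding N_def g_def .
  qed
  then show ?thesis by blast
qed

lemma sums_coeff_eqn_solution:
  assumes g: "g holomorphic_on ball 0 1" and e: "coeff_eqn (taylor_coeff g) e"
    and h: "\<And>w. cmod w < R \<Longrightarrow> (\<lambda>n. of_nat (Suc n) * e (Suc n) * w ^ n) sums h w"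
    and z: "z \<in> ball 0 R"
  shows "(\<lambda>k. e k * z ^ k) sums ((h (a * z ^ M) - g z) / c)"
proof -
  have zb: "z \<in> ball 0 1" using z R1 by simp
  have "cmod (a * z ^ M) < R" using norm_mult_power_le[OF zb, of a M] aR by simp
  then have "(\<lambda>k. Dphi_coeff M a e k * z ^ k) sums h (a * z ^ M)"
    by (rule sums_Dphi_coeff_reindex[OF M1 h])
  then have "(\<lambda>k. (Dphi_coeff M a e k * z ^ k - taylor_coeff g k * z ^ k) / c)
               sums ((h (a * z ^ M) - g z) / c)"
    by (intro sums_divide sums_diff taylor_coeff_sums[OF g zb])
  moreover have "(Dphi_coeff M a e k * z ^ k - taylor_coeff g k * z ^ k) / c = e k * z ^ k" for k
  proof -
    have "Dphi_coeff M a e k = taylor_coeff g k + c * e k" using e unfolding coeff_eqn_def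
      by (metis add_diff_cancel_left' diff_add_cancel)
    then show ?thesis using c0 by (simp add: algebra_simps)
  qed
  ultimately show ?thesis by simp
qed

lemma resolvent_surjective:
  assumes p: "p > 1" and g: "g \<in> Sp p"
  shows "\<exists>f\<in>Sp p. resolvent f = g"
proof -
  note gd = SpD[OF g]
  obtain K0 where solvable: "\<And>G B. (\<And>n. cmod (G n) * R ^ n \<le> B) \<Longrightarrow>
      \<exists>e. coeff_eqn G e \<and> (\<forall>k. cmod (e k) * R ^ k \<le> K0 * B)"
    using coeff_eqn_solvable by blast
  obtain e where e1: "coeff_eqn (taylor_coeff g) e" and e2: "\<And>k. cmod (e k) * R ^ k \<le> K0 * (2 * Sp_norm p g)"
    using solvable[OF norm_taylor_coeff_le_Sp_norm[OF g p R_pos R1]] by blast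
  define h where "h w = (\<Sum>n. of_nat (Suc n) * e (Suc n) * w ^ n)" for w
  have hs: "(\<lambda>n. of_nat (Suc n) * e (Suc n) * w ^ n) sums h w" if "cmod w < R" for w
    unfolding h_def using summable_deriv_series_weighted[OF R_pos e2 that] by (rule summable_sums)
  have hhol: "h holomorphic_on ball 0 R"
    by (rule power_series_holomorphic) (use hs in auto)
  have wR: "a * z ^ M \<in> ball 0 R" if "z \<in> ball 0 1" for z
    using norm_mult_power_le[OF that, of a M] aR by simp
  define F where "F z = (if z \<in> ball 0 1 then (h (a * z ^ M) - g z) / c else 0)" for z
  have "(h \<circ> (\<lambda>z. a * z ^ M)) holomorphic_on ball 0 1"
    by (rule holomorphic_on_compose_gen[OF _ hhol]) (auto intro!: holomorphic_intros wR)
  then have "(\<lambda>z. (h (a * z ^ M) - g z) / c) holomorphic_on ball 0 1"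
    using c0 by (intro holomorphic_intros gd(1)) (auto simp: o_def)
  then have Fhol: "F holomorphic_on ball 0 1"
    by (rule holomorphic_transform) (simp add: F_def)
  have "(\<lambda>k. e k * z ^ k) sums F z" if "z \<in> ball 0 R" for z
    using sums_coeff_eqn_solution[OF gd(1) e1 hs that] that R1 by (simp add: F_def)
  then have cfF: "taylor_coeff F = e"
    using taylor_coeff_unique[OF R_pos] by blast
  have dF: "deriv F w = h w" if "w \<in> ball 0 R" for w
  proof -
    have "(\<lambda>n. taylor_coeff (deriv F) n * w ^ n) sums deriv F w"
      by (rule taylor_coeff_sums[OF holomorphic_deriv[OF Fhol]]) (use that R1 in auto)
    then show ?thesis using hs[of w] that sums_unique2 unfolding taylor_coeff_deriv cfF by auto
  qed
  have TF: "resolvent F = g"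
  proof
    fix z
    show "resolvent F z = g z"
      using dF[OF wR] c0 gd(3)[of z] unfolding Dphi_def F_def by auto
  qed
  have "deriv F \<in> hardy p"
    by (rule hardy_deriv_if_resolvent_eq(1)[OF p Fhol g TF]) (use e2 cfF in simp)
  moreover have "disk_fun F" unfolding disk_fun_def using Fhol by (simp add: F_def)
  ultimately show ?thesis unfolding Sp_def using TF by blast
qed

end

section \<open>The spectrum\<close>

lemma notin_Dphi_spectrum_pow:
  fixes a c :: complex
  assumes p: "p > 1" and a: "0 < cmod a" "cmod a < 1" and M: "M \<ge> 1"
    and c: "c \<noteq> 0" "M = 2 \<longrightarrow> c \<noteq> 2 * a"
  shows "c \<notin> Dphi_spectrum p (\<lambda>z. a * z ^ M)"
proof -
  interpret resolvent_data a c M "(1 + cmod a) / 2"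
    by unfold_locales (use a M c in auto)
  have "resolvent ` Sp p = Sp p"
    using resolvent_in_Sp[OF p] resolvent_surjective[OF p] by blast
  then have "bij_betw resolvent (Sp p) (Sp p)"
    unfolding bij_betw_def using inj_on_resolvent by blast
  then show ?thesis using resolvent_bounded_below[OF p] unfolding Dphi_spectrum_def by blast
qed

lemma hardy_zero: "p > 0 \<Longrightarrow> (\<lambda>z. 0) \<in> hardy p"
  unfolding hardy_def integral_mean_def by (auto intro: bdd_aboveI[of _ 0])

lemma Dphi_spectrum_eigenvalueI:
  assumes p: "p > 1" and P: "P \<in> Sp p" "P \<noteq> (\<lambda>z. 0)"
    and eigen: "\<And>z. z \<in> ball 0 1 \<Longrightarrow> deriv P (\<phi> z) = c * P z"
  shows "c \<in> Dphi_spectrum p \<phi>"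
proof -
  let ?T = "\<lambda>f z. Dphi \<phi> f z - c * f z"
  have "(\<lambda>z. 0) \<in> Sp p" unfolding Sp_def disk_fun_def using hardy_zero p by simp
  moreover have "?T P = ?T (\<lambda>z. 0)"
    using eigen SpD(3)[OF P(1)] by (auto simp: Dphi_def)
  ultimately have "\<not> inj_on ?T (Sp p)" using P inj_onD[of ?T "Sp p" P "\<lambda>z. 0"] by blast
  then show ?thesis unfolding Dphi_spectrum_def bij_betw_def by blast
qed

lemma monomial_in_Sp:
  fixes n :: nat
  assumes p: "p > 1"
  defines "P \<equiv> \<lambda>z::complex. if z \<in> ball 0 1 then z ^ n else 0"
  shows "P \<in> Sp p" and "\<And>w. w \<in> ball 0 1 \<Longrightarrow> deriv P w = of_nat n * w ^ (n - 1)"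
proof -
  have dP: "(P has_field_derivative of_nat n * z ^ (n - 1)) (at z)" if z: "z \<in> ball 0 1" for z
  proof -
    have "((\<lambda>z. z ^ n) has_field_derivative of_nat n * z ^ (n - 1)) (at z)"
      using DERIV_power[OF DERIV_ident[of "at z"], of n] by simp
    then show ?thesis by (rule has_field_derivative_transform_within_open[OF _ _ z]) (auto simp: P_def)
  qed
  then show eq: "\<And>w. w \<in> ball 0 1 \<Longrightarrow> deriv P w = of_nat n * w ^ (n - 1)"
    using DERIV_imp_deriv by blast
  have hol: "P holomorphic_on ball 0 1"
    unfolding holomorphic_on_def using dP field_differentiable_def field_differentiable_at_within by blast
  have le: "cmod (deriv P z) \<le> real n + 0 * cmod ((\<lambda>z. 0::complex) z)" if z: "z \<in> ball 0 1" for z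
  proof -
    have "cmod z ^ (n - 1) \<le> 1" using z by (intro power_le_one) auto
    then show ?thesis unfolding eq[OF z] by (simp add: norm_mult norm_power mult_left_le)
  qed
  have "deriv P \<in> hardy p"
    by (rule hardy_dominated(1)[OF p holomorphic_deriv[OF hol open_ball] hardy_zero _ _ le]) (use p in auto)
  moreover have "disk_fun P" unfolding disk_fun_def using hol by (auto simp: P_def)
  ultimately show "P \<in> Sp p" unfolding Sp_def by auto
qed

lemma in_Dphi_spectrum_pow:
  fixes a :: complex
  assumes p: "p > 1" and a: "cmod a < 1" and c: "c = 0 \<or> (M = 2 \<and> c = 2 * a)"
  shows "c \<in> Dphi_spectrum p (\<lambda>z. a * z ^ M)"
proof -
  define n :: nat where "n = (if c = 0 then 0 else 2)"
  define P where "P = (\<lambda>z::complex. if z \<in> ball 0 1 then z ^ n else 0)"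
  note P = monomial_in_Sp[OF p, where n = n, folded P_def]
  show ?thesis
  proof (rule Dphi_spectrum_eigenvalueI[OF p P(1)])
    show "P \<noteq> (\<lambda>z. 0)"
    proof
      assume "P = (\<lambda>z. 0)"
      then have "P (1/2) = 0" by simp
      then show False by (simp add: P_def)
    qed
    fix z :: complex assume z: "z \<in> ball 0 1"
    have "deriv P (a * z ^ M) = of_nat n * (a * z ^ M) ^ (n - 1)"
      by (rule P(2)[OF mult_power_in_ball[OF a z]])
    then show "deriv P (a * z ^ M) = c * P z"
      using c z unfolding P_def n_def by (cases "c = 0") (auto simp: power2_eq_square)
  qed
qed

theorem theorem4p2:
  fixes p :: real and a :: complex and M :: nat
  assumes "p > 1" and "0 < cmod a" and "cmod a < 1" and "M \<ge> 1"
  shows "Dphi_spectrum p (\<lambda>z. a * z ^ M) = (if M = 2 then {0, 2 * a} else {0})"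
proof (rule set_eqI)
  fix c
  have "c \<in> Dphi_spectrum p (\<lambda>z. a * z ^ M) \<longleftrightarrow> c = 0 \<or> (M = 2 \<and> c = 2 * a)"
    using notin_Dphi_spectrum_pow[OF assms] in_Dphi_spectrum_pow[OF assms(1,3)] by blast
  then show "c \<in> Dphi_spectrum p (\<lambda>z. a * z ^ M) \<longleftrightarrow> c \<in> (if M = 2 then {0, 2 * a} else {0})"
    by auto
qed

end
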